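(* Let $N\ge1$ and let $\psi$ be an Orlicz function satisfying the $\Delta^2$-Condition. Then for every $\zeta\in\mathbb{S}_N$ and every $b>1$ there exists a holomorphic map $\phi:\mathbb{B}_N\to\mathbb{B}_N$ with $\phi(\mathbb{B}_N)\subset\Gamma(\zeta,b)$ such that the composition operator $C_\phi$ is not compact on $H^\psi(\mathbb{B}_N)$.
   Context: $\mathbb{B}_N$ is the open unit ball of $\mathbb{C}^N$, $\mathbb{S}_N$ its boundary sphere with normalized invariant measure $\sigma_N$, $\langle z,w\rangle=\sum_i z_i\overline{w_i}$. For $\zeta\in\mathbb{S}_N$ and $a>1$, the Korányi approach region is $\Gamma(\zeta,a)=\{z\in\mathbb{B}_N:|1-\langle z,\zeta\rangle|<\frac a2(1-|z|^2)\}$. $C_\phi f=f\circ\phi$. An Orlicz function is a strictly convex $\psi:[0,\infty)\to[0,\infty)$ with $\psi(0)=0$, continuous at $0$, and $\psi(x)/x\to\infty$. $\psi$ satisfies the $\Delta^2$-Condition if there exist $C>0$ and $x_0>0$ with $\psi(x)^2\le\psi(Cx)$ for all $x\ge x_0$. The Hardy–Orlicz space $H^\psi(\mathbb{B}_N)$ is the Banach space of holomorphic $f$ on $\mathbb{B}_N$ with $\sup_{0<r<1}\|f_r\|_\psi<\infty$, where $f_r(\zeta)=f(r\zeta)$ and $\|h\|_\psi=\inf\{C>0:\int_{\mathbb{S}_N}\psi(|h|/C)\,d\sigma_N\le1\}$ is the Luxemburg norm. *)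

theory Defs
  imports "HOL-Analysis.Analysis"
begin

text \<open>Points of C^N are modelled as complex ^ 'n for a finite type 'n (N = CARD('n) >= 1).
  The norm of complex ^ 'n is the Euclidean norm.\<close>

definition cinner :: "complex ^ 'n \<Rightarrow> complex ^ 'n \<Rightarrow> complex" where
  "cinner z w = (\<Sum>i\<in>UNIV. z $ i * cnj (w $ i))"

definition holo_fun :: "(complex ^ 'n \<Rightarrow> complex) \<Rightarrow> (complex ^ 'n) set \<Rightarrow> bool" where
  "holo_fun f S \<longleftrightarrow> open S \<and> (\<forall>z\<in>S. \<exists>L. (f has_derivative L) (at z) \<and>
      (\<forall>c x. L (c *s x) = c * L x))"

definition holo_map :: "(complex ^ 'n \<Rightarrow> complex ^ 'm) \<Rightarrow> (complex ^ 'n) set \<Rightarrow> bool" where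
  "holo_map f S \<longleftrightarrow> open S \<and> (\<forall>z\<in>S. \<exists>L. (f has_derivative L) (at z) \<and>
      (\<forall>c x. L (c *s x) = c *s L x))"

text \<open>Normalized invariant measure on the unit sphere: push-forward of the normalized Lebesgue
  measure of the unit ball under the radial projection x \<mapsto> x/|x|.\<close>

definition sphere_measure :: "(complex ^ 'n) measure" where
  "sphere_measure = distr (uniform_measure lborel (ball 0 1)) borel (\<lambda>x. x /\<^sub>R norm x)"

definition koranyi :: "complex ^ 'n \<Rightarrow> real \<Rightarrow> (complex ^ 'n) set" where
  "koranyi \<zeta> a = {z \<in> ball 0 1. cmod (1 - cinner z \<zeta>) < a / 2 * (1 - (norm z)\<^sup>2)}"

definition orlicz_function :: "(real \<Rightarrow> real) \<Rightarrow> bool" where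
  "orlicz_function \<psi> \<longleftrightarrow>
     (\<forall>x\<ge>0. \<psi> x \<ge> 0) \<and>
     (\<forall>x\<ge>0. \<forall>y\<ge>0. \<forall>t::real. x \<noteq> y \<and> 0 < t \<and> t < 1 \<longrightarrow>
        \<psi> (t * x + (1 - t) * y) < t * \<psi> x + (1 - t) * \<psi> y) \<and>
     \<psi> 0 = 0 \<and> continuous (at 0 within {0..}) \<psi> \<and>
     filterlim (\<lambda>x. \<psi> x / x) at_top at_top"

definition delta2_condition :: "(real \<Rightarrow> real) \<Rightarrow> bool" where
  "delta2_condition \<psi> \<longleftrightarrow> (\<exists>C>0. \<exists>x0>0. \<forall>x\<ge>x0. (\<psi> x)\<^sup>2 \<le> \<psi> (C * x))"

definition orlicz_set :: "(real \<Rightarrow> real) \<Rightarrow> (complex ^ 'n \<Rightarrow> complex) \<Rightarrow> real set" where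
  "orlicz_set \<psi> h = {C. C > 0 \<and>
     (\<integral>\<^sup>+ \<zeta>. ennreal (\<psi> (cmod (h \<zeta>) / C)) * indicator (sphere 0 1) \<zeta> \<partial>sphere_measure) \<le> 1}"

definition lux_norm :: "(real \<Rightarrow> real) \<Rightarrow> (complex ^ 'n \<Rightarrow> complex) \<Rightarrow> real" where
  "lux_norm \<psi> h = Inf (orlicz_set \<psi> h)"

definition dilate :: "(complex ^ 'n \<Rightarrow> complex) \<Rightarrow> real \<Rightarrow> complex ^ 'n \<Rightarrow> complex" where
  "dilate f r = (\<lambda>\<zeta>. f (r *\<^sub>R \<zeta>))"

text \<open>Hardy--Orlicz space: holomorphic f with sup_{0<r<1} |f_r|_psi finite
  (each |f_r|_psi being finite, i.e. the defining set nonempty).\<close>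

definition hardy_orlicz :: "(real \<Rightarrow> real) \<Rightarrow> (complex ^ 'n \<Rightarrow> complex) set" where
  "hardy_orlicz \<psi> = {f. holo_fun f (ball 0 1) \<and>
     (\<exists>M. \<forall>r\<in>{0<..<1}. orlicz_set \<psi> (dilate f r) \<noteq> {} \<and> lux_norm \<psi> (dilate f r) \<le> M)}"

definition ho_norm :: "(real \<Rightarrow> real) \<Rightarrow> (complex ^ 'n \<Rightarrow> complex) \<Rightarrow> real" where
  "ho_norm \<psi> f = (SUP r\<in>{0<..<1}. lux_norm \<psi> (dilate f r))"

definition compact_op_ho ::
  "(real \<Rightarrow> real) \<Rightarrow> ((complex ^ 'n \<Rightarrow> complex) \<Rightarrow> (complex ^ 'n \<Rightarrow> complex)) \<Rightarrow> bool" where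
  "compact_op_ho \<psi> T \<longleftrightarrow>
     (\<forall>f\<in>hardy_orlicz \<psi>. T f \<in> hardy_orlicz \<psi>) \<and>
     (\<forall>F::nat \<Rightarrow> (complex ^ 'n \<Rightarrow> complex). (\<forall>k. F k \<in> hardy_orlicz \<psi>) \<and>
         (\<exists>B. \<forall>k. ho_norm \<psi> (F k) \<le> B) \<longrightarrow>
       (\<exists>s g. strict_mono s \<and> g \<in> hardy_orlicz \<psi> \<and>
          (\<lambda>k. ho_norm \<psi> (\<lambda>z. T (F (s k)) z - g z)) \<longlonglongrightarrow> 0))"

definition comp_op :: "(complex ^ 'n \<Rightarrow> complex ^ 'n) \<Rightarrow> (complex ^ 'n \<Rightarrow> complex) \<Rightarrow> (complex ^ 'n \<Rightarrow> complex)" where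
  "comp_op \<phi> f = f \<circ> \<phi>"

end

theory Submission
  imports Defs
begin

(*
  Fix zeta on the unit sphere and b > 1.  The symbol is the "slice map"
  phi(z) = U(<z,zeta>) zeta, where U(v) = 1 - eps ((1 - v)/2)^alpha is a holomorphic
  self-map of the disc with |1 - U v| <= |1 - v|^alpha that sends the disc into a
  Stolz angle at 1; for alpha, eps small this forces phi(B_N) into the Koranyi region
  Gamma(zeta, b).

  Non-compactness is tested on the peak functions
      F_K(z) = K ((1 - a)/(1 - a <z,zeta>))^m,        a = a(K) -> 1 as K -> oo.
  (i)  Using the Delta^2-condition, a and m can be chosen so that all F_K lie in a
       fixed ball of H^psi: F_K is <= K on a small cap where psi(K/B) is paid, and
       <= 1 elsewhere (cap measure estimate on the sphere).
  (ii) C_phi F_K is >= K/2^m on a cap of measure ~ 1/psi(K) near zeta (it is here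
       that the Holder bound |1 - U v| <= |1 - v|^alpha is used), while |C_phi F_K'| <= K'
       everywhere.  Hence for a rapidly increasing sequence K_j, the images C_phi F_K_j
       are uniformly separated in the Luxemburg norm and no subsequence can converge.
*)

section \<open>Orlicz functions\<close>

lemma orlicz_nonneg: "orlicz_function \<psi> \<Longrightarrow> x \<ge> 0 \<Longrightarrow> \<psi> x \<ge> 0"
  unfolding orlicz_function_def by blast

lemma orlicz_zero: "orlicz_function \<psi> \<Longrightarrow> \<psi> 0 = 0"
  unfolding orlicz_function_def by blast

text \<open>Non-strict convexity on the half line (the definition only states strict convexity).\<close>

lemma orlicz_convex:
  assumes o: "orlicz_function \<psi>" and x: "x \<ge> 0" and y: "y \<ge> 0" and t: "0 \<le> t" "t \<le> 1"
  shows "\<psi> (t * x + (1 - t) * y) \<le> t * \<psi> x + (1 - t) * \<psi> y"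
proof -
  consider "x = y" | "t = 0" | "t = 1" | "x \<noteq> y" "0 < t" "t < 1" using t by linarith
  then show ?thesis
  proof cases
    case 1 then show ?thesis by (simp add: algebra_simps flip: distrib_right)
  next
    case 4 then show ?thesis using o x y unfolding orlicz_function_def by (meson less_imp_le)
  qed auto
qed

text \<open>A convex function vanishing at 0 and non-negative is monotone on the half line.\<close>

lemma orlicz_mono:
  assumes o: "orlicz_function \<psi>" and x: "0 \<le> x" and xy: "x \<le> y"
  shows "\<psi> x \<le> \<psi> y"
proof (cases "x = 0")
  case True then show ?thesis using orlicz_zero[OF o] orlicz_nonneg[OF o] x xy by auto
next
  case False
  then have y0: "y > 0" using x xy by auto
  have "\<psi> x = \<psi> ((x/y) * y + (1 - x/y) * 0)" using y0 by simp
  also have "\<dots> \<le> (x/y) * \<psi> y + (1 - x/y) * \<psi> 0"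
    by (rule orlicz_convex[OF o]) (use x xy y0 in auto)
  also have "\<dots> \<le> \<psi> y" using orlicz_zero[OF o] orlicz_nonneg[OF o, of y] x xy y0
    by (simp add: divide_le_eq mult.commute mult_right_mono)
  finally show ?thesis .
qed

lemma orlicz_midpoint:
  assumes o: "orlicz_function \<psi>" and x: "x \<ge> 0" and y: "y \<ge> 0"
  shows "\<psi> ((x + y) / 2) \<le> (\<psi> x + \<psi> y) / 2"
  using orlicz_convex[OF o x y, of "1/2"] by (simp add: add_divide_distrib)

lemma orlicz_small_near_zero:
  assumes o: "orlicz_function \<psi>"
  shows "\<exists>y0>0. \<forall>y. 0 \<le> y \<and> y \<le> y0 \<longrightarrow> \<psi> y \<le> 1/2"
proof -
  have "continuous (at 0 within {0..}) \<psi>" using o unfolding orlicz_function_def by blast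
  then have "(\<psi> \<longlongrightarrow> 0) (at 0 within {0..})" using orlicz_zero[OF o]
    by (metis continuous_within)
  then have "\<forall>\<^sub>F y in at 0 within {0..}. dist (\<psi> y) 0 < 1/2"
    by (rule tendstoD) simp
  then obtain d where d: "d > 0"
      "\<And>y. y \<in> {0..} \<Longrightarrow> y \<noteq> 0 \<Longrightarrow> dist y 0 < d \<Longrightarrow> dist (\<psi> y) 0 < 1/2"
    unfolding eventually_at by blast
  show ?thesis
  proof (intro exI[of _ "d/2"] conjI allI impI)
    fix y assume y: "0 \<le> y \<and> y \<le> d/2"
    show "\<psi> y \<le> 1/2"
    proof (cases "y = 0")
      case True then show ?thesis using orlicz_zero[OF o] by simp
    next
      case False then show ?thesis using d(2)[of y] y d(1) by auto
    qed
  qed (use d in auto)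
qed

lemma orlicz_superlinear:
  assumes o: "orlicz_function \<psi>"
  shows "\<forall>\<^sub>F x in at_top. x \<le> \<psi> x"
proof -
  have "filterlim (\<lambda>x. \<psi> x / x) at_top at_top" using o unfolding orlicz_function_def by blast
  then have "\<forall>\<^sub>F x in at_top. 1 \<le> \<psi> x / x" by (simp add: filterlim_at_top)
  moreover have "\<forall>\<^sub>F x in at_top. (0::real) < x" by (rule eventually_gt_at_top)
  ultimately show ?thesis by eventually_elim (simp add: le_divide_eq)
qed

text \<open>This is what makes \<open>\<psi>(K/B)\<close> tiny compared with \<open>\<psi>(K)\<close> for a fixed large \<open>B\<close>.\<close>

lemma delta2_iterate:
  assumes o: "orlicz_function \<psi>" and d: "delta2_condition \<psi>"
  shows "\<exists>C\<ge>1. \<exists>x0>0. \<forall>J x. x \<ge> x0 \<longrightarrow> \<psi> x ^ (2^J) \<le> \<psi> (C^J * x)"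
proof -
  obtain C x0 where C: "C > 0" "x0 > 0" "\<And>x. x \<ge> x0 \<Longrightarrow> (\<psi> x)\<^sup>2 \<le> \<psi> (C * x)"
    using d unfolding delta2_condition_def by blast
  define C' where "C' = max C 1"
  have C': "(\<psi> x)\<^sup>2 \<le> \<psi> (C' * x)" if x: "x \<ge> x0" for x
  proof -
    have "(\<psi> x)\<^sup>2 \<le> \<psi> (C * x)" using C(3) x by blast
    also have "\<dots> \<le> \<psi> (C' * x)" using C x unfolding C'_def
      by (intro orlicz_mono[OF o]) (auto intro!: mult_right_mono)
    finally show ?thesis .
  qed
  have "\<forall>x. x \<ge> x0 \<longrightarrow> \<psi> x ^ (2^J) \<le> \<psi> (C'^J * x)" for J
  proof (induction J)
    case 0 then show ?case by simp
  next
    case (Suc J)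
    show ?case
    proof (intro allI impI)
      fix x assume x: "x \<ge> x0"
      have pos: "0 \<le> \<psi> x ^ 2 ^ J" using orlicz_nonneg[OF o, of x] x C by simp
      have "1 * x \<le> C'^J * x" using x C unfolding C'_def by (intro mult_right_mono) auto
      then have ge: "C'^J * x \<ge> x0" using x by simp
      have "\<psi> x ^ 2 ^ Suc J = (\<psi> x ^ 2 ^ J)\<^sup>2" by (simp add: power_mult[symmetric] mult.commute)
      also have "\<dots> \<le> (\<psi> (C'^J * x))\<^sup>2" using Suc x pos by (intro power_mono) auto
      also have "\<dots> \<le> \<psi> (C' * (C'^J * x))" using C' ge by blast
      finally show "\<psi> x ^ 2 ^ Suc J \<le> \<psi> (C' ^ Suc J * x)" by (simp add: mult.assoc)
    qed
  qed
  then show ?thesis using C unfolding C'_def by (intro exI[of _ "max C 1"]) auto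
qed


section \<open>The hermitian product on \<open>\<complex>\<^sup>N\<close>\<close>

lemma cinner_diff_left: "cinner (x - y) z = cinner x z - cinner y z"
  unfolding cinner_def by (simp add: left_diff_distrib sum_subtractf)

lemma cinner_smult_left: "cinner (c *s x) z = c * cinner x z"
  unfolding cinner_def by (simp add: sum_distrib_left mult.assoc)

lemma cinner_scaleR_left: "cinner (r *\<^sub>R x) z = of_real r * cinner x z"
  unfolding cinner_def vector_scaleR_component
  by (simp add: sum_distrib_left mult.assoc scaleR_conv_of_real[where 'a=complex]
      del: scaleR_conv_of_real)

lemma cinner_self: "cinner x x = of_real ((norm x)\<^sup>2)"
proof -
  have "(norm x)\<^sup>2 = (\<Sum>i\<in>UNIV. (cmod (x$i))\<^sup>2)"
    unfolding norm_vec_def L2_set_def by (simp add: sum_nonneg)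
  then show ?thesis
    unfolding cinner_def of_real_sum by (simp add: complex_mult_cnj cmod_power2 del: of_real_power)
qed

lemma cinner_unit_self: "norm \<zeta> = 1 \<Longrightarrow> cinner \<zeta> \<zeta> = 1"
  by (simp add: cinner_self)

lemma Re_cinner: "Re (cinner x y) = x \<bullet> y"
  unfolding cinner_def inner_vec_def inner_complex_def by (simp add: Re_sum)

lemma norm_smult_vec: "norm (c *s (x::complex^'n)) = cmod c * norm x"
  unfolding norm_vec_def by (simp add: norm_mult L2_set_right_distrib)

text \<open>Cauchy--Schwarz, reduced to the real case by rotating \<open>x\<close>.\<close>

lemma cinner_cauchy_schwarz: "cmod (cinner x y) \<le> norm x * norm y"
proof (cases "cinner x y = 0")
  case True then show ?thesis by simp
next
  case False
  define u where "u = cnj (cinner x y) / cmod (cinner x y)"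
  have "u * cinner x y = cnj (cinner x y) * cinner x y / cmod (cinner x y)" unfolding u_def by simp
  also have "\<dots> = complex_of_real ((cmod (cinner x y))\<^sup>2) / complex_of_real (cmod (cinner x y))"
    by (simp only: complex_norm_square mult.commute)
  also have "\<dots> = complex_of_real (cmod (cinner x y))" using False by (simp add: power2_eq_square)
  finally have "cmod (cinner x y) = Re (u * cinner x y)" by simp
  also have "\<dots> = (u *s x) \<bullet> y" by (simp add: cinner_smult_left[symmetric] Re_cinner)
  also have "\<dots> \<le> norm (u *s x) * norm y" by (rule norm_cauchy_schwarz)
  also have "\<dots> = norm x * norm y" using False unfolding norm_smult_vec u_def by (simp add: norm_divide)
  finally show ?thesis .
qed

lemma cinner_ball_sphere: "z \<in> ball (0::complex^'n) 1 \<Longrightarrow> norm \<zeta> = 1 \<Longrightarrow> cmod (cinner z \<zeta>) < 1"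
  using cinner_cauchy_schwarz[of z \<zeta>] by simp

lemma cinner_sphere_sphere: "norm (z::complex^'n) = 1 \<Longrightarrow> norm \<zeta> = 1 \<Longrightarrow> cmod (cinner z \<zeta>) \<le> 1"
  using cinner_cauchy_schwarz[of z \<zeta>] by simp

lemma bounded_linear_cinner: "bounded_linear (\<lambda>z. cinner z y)"
proof (rule bounded_linear_intro[where K = "norm y"])
  show "cinner (x + z) y = cinner x y + cinner z y" for x z
    unfolding cinner_def by (simp add: distrib_right sum.distrib)
  show "cinner (r *\<^sub>R x) y = r *\<^sub>R cinner x y" for r x
    by (simp only: cinner_scaleR_left scaleR_conv_of_real[where 'a=complex])
  show "norm (cinner x y) \<le> norm x * norm y" for x by (rule cinner_cauchy_schwarz)
qed

lemma continuous_on_cinner[continuous_intros]: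
  "continuous_on S f \<Longrightarrow> continuous_on S (\<lambda>z. cinner (f z) y)"
  using bounded_linear.continuous_on[OF bounded_linear_cinner] by blast

lemma cinner_measurable[measurable]: "(\<lambda>z. cinner z y) \<in> borel_measurable borel"
  by (rule borel_measurable_continuous_onI) (intro continuous_intros)

lemma bounded_linear_smult_const: "bounded_linear (\<lambda>c::complex. c *s (y::complex^'n))"
proof (rule bounded_linear_intro[where K = "norm y"])
  show "(x + z) *s y = x *s y + z *s y" for x z by (simp add: vec_eq_iff distrib_right)
  show "(r *\<^sub>R x) *s y = r *\<^sub>R (x *s y)" for r x by (simp add: vec_eq_iff)
  show "norm (x *s y) \<le> norm x * norm y" for x by (simp add: norm_smult_vec)
qed


section \<open>Measure estimates on the unit sphere\<close>

abbreviation unit_sphere :: "(complex^'n) set" where "unit_sphere \<equiv> sphere 0 1"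

lemma sets_sphere_measure[simp, measurable_cong]:
  "sets (sphere_measure :: (complex^'n) measure) = sets borel"
  unfolding sphere_measure_def by simp

lemma measurable_sphere_measure_iff:
  "f \<in> borel_measurable (sphere_measure :: (complex^'n) measure) \<longleftrightarrow> f \<in> borel_measurable borel"
  by (simp only: measurable_cong_sets[OF sets_sphere_measure refl])

lemma radial_projection_measurable[measurable]:
  "(\<lambda>x::complex^'n. x /\<^sub>R norm x) \<in> borel_measurable borel"
  by measurable

lemma unit_ball_volume_pos: "measure lborel (ball (0::complex^'n) 1) > 0"
  by (rule content_ball_pos) simp

lemma radial_preimage_fmeasurable:
  assumes A: "A \<in> sets borel"
  shows "(\<lambda>x. x /\<^sub>R norm x) -` A \<inter> ball (0::complex^'n) 1 \<in> fmeasurable lborel"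
proof -
  have "emeasure lborel ((\<lambda>x. x /\<^sub>R norm x) -` A \<inter> ball (0::complex^'n) 1)
      \<le> emeasure lborel (ball (0::complex^'n) 1)"
    by (rule emeasure_mono) auto
  then have "emeasure lborel ((\<lambda>x. x /\<^sub>R norm x) -` A \<inter> ball (0::complex^'n) 1) < \<infinity>"
    using emeasure_lborel_ball_finite[of "0::complex^'n" 1] by (meson le_less_trans)
  then show ?thesis
    using measurable_sets_borel[OF radial_projection_measurable A] by (simp add: fmeasurable_def)
qed

lemma sphere_measure_eq:
  assumes A: "A \<in> sets borel"
  shows "emeasure (sphere_measure :: (complex^'n) measure) A
     = ennreal (measure lborel ((\<lambda>x. x /\<^sub>R norm x) -` A \<inter> ball 0 1)
                / measure lborel (ball (0::complex^'n) 1))"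
proof -
  let ?U = "uniform_measure lborel (ball (0::complex^'n) 1)"
  let ?C = "(\<lambda>x. x /\<^sub>R norm x) -` A \<inter> ball (0::complex^'n) 1"
  have m: "(\<lambda>x::complex^'n. x /\<^sub>R norm x) \<in> measurable ?U borel"
    by (simp only: measurable_cong_sets[OF sets_uniform_measure refl]) simp
  have fin: "emeasure lborel X = ennreal (measure lborel X)" if "X \<in> fmeasurable lborel" for X
    using that by (simp add: emeasure_eq_measure2)
  have ball_fm: "ball (0::complex^'n) 1 \<in> fmeasurable lborel"
    by (auto simp: fmeasurable_def emeasure_lborel_ball_finite[unfolded infinity_ennreal_def])
  have "emeasure (sphere_measure :: (complex^'n) measure) A
      = emeasure ?U ((\<lambda>x. x /\<^sub>R norm x) -` A \<inter> space ?U)"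
    unfolding sphere_measure_def by (rule emeasure_distr[OF m A])
  also have "\<dots> = emeasure lborel ?C / emeasure lborel (ball (0::complex^'n) 1)"
    using A by (simp add: measurable_sets_borel[OF radial_projection_measurable A] Int_commute)
  also have "\<dots> = ennreal (measure lborel ?C) / ennreal (measure lborel (ball (0::complex^'n) 1))"
    using radial_preimage_fmeasurable[OF A] ball_fm by (simp add: fin)
  also have "\<dots> = ennreal (measure lborel ?C / measure lborel (ball (0::complex^'n) 1))"
    by (rule divide_ennreal) (auto simp: unit_ball_volume_pos)
  finally show ?thesis .
qed

lemma sphere_measure_le_1: "A \<in> sets borel \<Longrightarrow> emeasure (sphere_measure :: (complex^'n) measure) A \<le> 1"
proof -
  assume A: "A \<in> sets borel"
  have "measure lborel ((\<lambda>x. x /\<^sub>R norm x) -` A \<inter> ball 0 1) \<le> measure lborel (ball (0::complex^'n) 1)"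
    by (rule measure_mono_fmeasurable)
       (auto simp: measurable_sets_borel[OF radial_projection_measurable A] fmeasurable_def
         emeasure_lborel_ball_finite[unfolded infinity_ennreal_def])
  then show ?thesis unfolding sphere_measure_eq[OF A] using unit_ball_volume_pos[where 'n='n]
    by (simp add: divide_le_eq_1)
qed

text \<open>Lower bound for the measure of a spherical cap \<open>S \<inter> B(\<zeta>, s)\<close>: the cone over it
  contains the euclidean ball \<open>B(\<zeta>/2, s/4)\<close>.\<close>

lemma half_ball_subset_radial_cone:
  fixes \<zeta> :: "complex^'n"
  assumes \<zeta>: "norm \<zeta> = 1" and s: "0 < s" "s \<le> 1"
  shows "ball ((1/2) *\<^sub>R \<zeta>) (s/4) \<subseteq> (\<lambda>x. x /\<^sub>R norm x) -` (unit_sphere \<inter> ball \<zeta> s) \<inter> ball 0 1"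
proof
  fix x :: "complex^'n" assume x: "x \<in> ball ((1/2) *\<^sub>R \<zeta>) (s/4)"
  define h where "h = x - (1/2) *\<^sub>R \<zeta>"
  have hn: "norm h < s/4" using x unfolding h_def by (simp add: dist_norm norm_minus_commute)
  have xe: "x = (1/2) *\<^sub>R \<zeta> + h" unfolding h_def by simp
  have nx1: "norm x \<le> 1/2 + norm h"
    unfolding xe using norm_triangle_ineq[of "(1/2) *\<^sub>R \<zeta>" h] \<zeta> by simp
  have nx2: "norm x \<ge> 1/2 - norm h"
    unfolding xe using norm_triangle_ineq2[of "(1/2) *\<^sub>R \<zeta>" "-h"] \<zeta> by (simp add: norm_minus_cancel)
  have xpos: "norm x > 0" using nx2 hn s by linarith
  have "norm (x /\<^sub>R norm x - \<zeta>) < s"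
  proof -
    have e1: "2 *\<^sub>R h = 2 *\<^sub>R x - \<zeta>" unfolding h_def by (simp add: scaleR_diff_right)
    have e2: "(1 / norm x - 2) *\<^sub>R x = x /\<^sub>R norm x - 2 *\<^sub>R x"
      by (simp add: scaleR_left_diff_distrib divide_inverse)
    have e: "x /\<^sub>R norm x - \<zeta> = (1 / norm x - 2) *\<^sub>R x + 2 *\<^sub>R h"
      unfolding e1 e2 by simp
    have a: "norm ((1 / norm x - 2) *\<^sub>R x) = \<bar>1 - 2 * norm x\<bar>"
    proof -
      have "norm ((1 / norm x - 2) *\<^sub>R x) = \<bar>(1 / norm x - 2) * norm x\<bar>"
        by (simp only: norm_scaleR abs_mult abs_norm_cancel)
      also have "(1 / norm x - 2) * norm x = 1 - 2 * norm x" using xpos by (simp add: field_simps)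
      finally show ?thesis .
    qed
    have "\<bar>norm \<zeta> - norm (2 *\<^sub>R x)\<bar> \<le> norm (\<zeta> - 2 *\<^sub>R x)" by (rule norm_triangle_ineq3)
    also have "\<zeta> - 2 *\<^sub>R x = - (2 *\<^sub>R h)" unfolding h_def by (simp add: algebra_simps)
    finally have b: "\<bar>1 - 2 * norm x\<bar> \<le> 2 * norm h" using \<zeta> by simp
    have "norm (x /\<^sub>R norm x - \<zeta>) \<le> norm ((1 / norm x - 2) *\<^sub>R x) + norm (2 *\<^sub>R h)"
      unfolding e by (rule norm_triangle_ineq)
    also have "\<dots> \<le> 4 * norm h" using a b by simp
    finally show ?thesis using hn by simp
  qed
  then show "x \<in> (\<lambda>x. x /\<^sub>R norm x) -` (unit_sphere \<inter> ball \<zeta> s) \<inter> ball 0 1"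
    using nx1 hn s xpos by (simp add: dist_norm norm_minus_commute)
qed

lemma sphere_measure_cap_lower:
  assumes \<zeta>: "norm \<zeta> = 1" and s: "0 < s" "s \<le> 1"
  shows "emeasure (sphere_measure :: (complex^'n) measure) (unit_sphere \<inter> ball \<zeta> s)
           \<ge> ennreal ((s/4)^DIM(complex^'n))"
proof -
  have meas: "unit_sphere \<inter> ball \<zeta> s \<in> sets borel" by (simp add: borel_closed)
  have "measure lborel (ball ((1/2) *\<^sub>R \<zeta>) (s/4))
      \<le> measure lborel ((\<lambda>x. x /\<^sub>R norm x) -` (unit_sphere \<inter> ball \<zeta> s) \<inter> ball (0::complex^'n) 1)"
    by (rule measure_mono_fmeasurable[OF half_ball_subset_radial_cone[OF \<zeta> s]])
       (use radial_preimage_fmeasurable[OF meas] in auto)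
  moreover have "measure lborel (ball ((1/2) *\<^sub>R \<zeta>) (s/4))
      = (s/4)^DIM(complex^'n) * measure lborel (ball (0::complex^'n) 1)"
    by (rule content_ball_conv_unit_ball) (use s in auto)
  ultimately have "(s/4)^DIM(complex^'n)
      \<le> measure lborel ((\<lambda>x. x /\<^sub>R norm x) -` (unit_sphere \<inter> ball \<zeta> s) \<inter> ball (0::complex^'n) 1)
         / measure lborel (ball (0::complex^'n) 1)"
    using unit_ball_volume_pos[where 'n='n] by (simp add: le_divide_eq)
  then show ?thesis unfolding sphere_measure_eq[OF meas] by (rule ennreal_leI)
qed

text \<open>Upper bound for the Koranyi-type caps \<open>{z \<in> S. |1 - \<langle>z,\<zeta>\<rangle>| < \<tau>}\<close>: their cones lie in the
  slab \<open>|Im \<langle>x,\<zeta>\<rangle>| < \<tau>\<close> of the unit ball, and \<open>\<approx> 1/\<tau>\<close> disjoint translates of this slab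
  fit into \<open>B(0,2)\<close>.\<close>

lemma radial_cone_subset_slab:
  assumes \<zeta>: "norm \<zeta> = 1"
  shows "(\<lambda>x. x /\<^sub>R norm x) -` {z \<in> unit_sphere. cmod (1 - cinner z \<zeta>) < \<tau>} \<inter> ball 0 1
           \<subseteq> {x \<in> ball (0::complex^'n) 1. \<bar>Im (cinner x \<zeta>)\<bar> < \<tau>}"
proof
  fix x :: "complex^'n"
  assume x: "x \<in> (\<lambda>x. x /\<^sub>R norm x) -` {z \<in> unit_sphere. cmod (1 - cinner z \<zeta>) < \<tau>} \<inter> ball 0 1"
  then have x1: "norm x < 1" and c: "cmod (1 - cinner (x /\<^sub>R norm x) \<zeta>) < \<tau>"
    and nz: "norm (x /\<^sub>R norm x) = 1"
    by auto
  have x0: "norm x > 0" using nz by (cases "x = 0") auto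
  have "cinner (x /\<^sub>R norm x) \<zeta> = of_real (1 / norm x) * cinner x \<zeta>"
    by (simp add: cinner_scaleR_left divide_inverse)
  then have "Im (cinner x \<zeta>) = norm x * Im (cinner (x /\<^sub>R norm x) \<zeta>)" using x0 by simp
  also have "\<bar>\<dots>\<bar> \<le> norm x * cmod (1 - cinner (x /\<^sub>R norm x) \<zeta>)"
    using x0 abs_Im_le_cmod[of "1 - cinner (x /\<^sub>R norm x) \<zeta>"] by (simp add: abs_mult)
  also have "\<dots> \<le> cmod (1 - cinner (x /\<^sub>R norm x) \<zeta>)"
    using x1 by (intro mult_left_le_one_le) auto
  finally show "x \<in> {x \<in> ball 0 1. \<bar>Im (cinner x \<zeta>)\<bar> < \<tau>}" using x1 c by simp
qed

lemma slab_translates: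
  fixes \<zeta> :: "complex^'n"
  assumes \<zeta>: "norm \<zeta> = 1" and \<tau>: "0 < \<tau>" and M: "2 * \<tau> * real M \<le> 1"
  defines "T \<equiv> \<lambda>j::nat. (\<lambda>x. - ((\<i> * of_real (2 * \<tau> * real j)) *s \<zeta>) + x) -`
             {x \<in> ball (0::complex^'n) 1. \<bar>Im (cinner x \<zeta>)\<bar> < \<tau>}"
  shows "disjoint_family_on T {..<M}" and "(\<Union>j\<in>{..<M}. T j) \<subseteq> ball 0 2"
proof -
  define c where "c j = (\<i> * of_real (2 * \<tau> * real j)) *s \<zeta>" for j :: nat
  have T_Im: "\<bar>Im (cinner x \<zeta>) - 2 * \<tau> * real j\<bar> < \<tau>" if "x \<in> T j" for x j
  proof -
    have "cinner (- c j + x) \<zeta> = cinner x \<zeta> - \<i> * of_real (2 * \<tau> * real j)"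
      unfolding c_def using cinner_unit_self[OF \<zeta>] by (simp add: cinner_diff_left cinner_smult_left)
    then show ?thesis using that unfolding T_def c_def by simp
  qed
  show "disjoint_family_on T {..<M}"
    unfolding disjoint_family_on_def
  proof (intro ballI impI)
    fix j l :: nat assume jl: "j \<noteq> l"
    show "T j \<inter> T l = {}"
    proof (rule ccontr)
      assume "T j \<inter> T l \<noteq> {}"
      then obtain x where "x \<in> T j" "x \<in> T l" by blast
      then have "\<bar>2 * \<tau> * real j - 2 * \<tau> * real l\<bar> < 2 * \<tau>"
        using T_Im[of x j] T_Im[of x l] by linarith
      then have "\<bar>real j - real l\<bar> < 1" using \<tau> by (simp add: abs_mult flip: right_diff_distrib)
      then show False using jl by linarith
    qed
  qed
  show "(\<Union>j\<in>{..<M}. T j) \<subseteq> ball 0 2"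
  proof
    fix x assume "x \<in> (\<Union>j\<in>{..<M}. T j)"
    then obtain j where j: "j < M" "x \<in> T j" by auto
    then have a: "norm (- c j + x) < 1" unfolding T_def c_def by simp
    have "norm (c j) = 2 * \<tau> * real j" unfolding c_def using \<zeta> \<tau> by (simp add: norm_smult_vec norm_mult)
    also have "\<dots> \<le> 2 * \<tau> * real M" using j \<tau> by simp
    also have "\<dots> \<le> 1" by (rule M)
    finally have b: "norm (c j) \<le> 1" .
    have "norm x \<le> norm (- c j + x) + norm (c j)" using norm_triangle_ineq[of "- c j + x" "c j"] by simp
    then show "x \<in> ball 0 2" using a b by simp
  qed
qed

lemma slab_volume_upper:
  fixes \<zeta> :: "complex^'n"
  assumes \<zeta>: "norm \<zeta> = 1" and \<tau>: "0 < \<tau>" and M: "2 * \<tau> * real M \<le> 1"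
  shows "real M * measure lborel {x \<in> ball (0::complex^'n) 1. \<bar>Im (cinner x \<zeta>)\<bar> < \<tau>}
           \<le> 2 ^ DIM(complex^'n) * measure lborel (ball (0::complex^'n) 1)"
proof -
  define Q where "Q = {x \<in> ball (0::complex^'n) 1. \<bar>Im (cinner x \<zeta>)\<bar> < \<tau>}"
  have Qm: "Q \<in> sets borel" unfolding Q_def by measurable
  define c where "c j = (\<i> * of_real (2 * \<tau> * real j)) *s \<zeta>" for j :: nat
  define T where "T j = (\<lambda>x. (- c j) + x) -` Q" for j
  have disj: "disjoint_family_on T {..<M}" and Un: "(\<Union>j\<in>{..<M}. T j) \<subseteq> ball 0 2"
    unfolding T_def c_def Q_def by (rule slab_translates[OF \<zeta> \<tau> M])+
  have Tm: "T j \<in> sets borel" for j unfolding T_def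
    by (intro measurable_sets_borel[OF _ Qm] borel_measurable_continuous_onI continuous_intros)
  have T_measure: "measure lborel (T j) = measure lborel Q" for j
  proof -
    have "measure lborel Q = measure (distr lborel borel ((+) (- c j))) Q"
      by (simp add: lborel_distr_plus)
    also have "\<dots> = measure lborel ((+) (- c j) -` Q \<inter> space lborel)"
      by (rule measure_distr) (use Qm in auto)
    finally show ?thesis unfolding T_def by simp
  qed
  have ball2_fm: "ball (0::complex^'n) 2 \<in> fmeasurable lborel"
    by (auto simp: fmeasurable_def emeasure_lborel_ball_finite[unfolded infinity_ennreal_def])
  have "real M * measure lborel Q = (\<Sum>j\<in>{..<M}. measure lborel (T j))" by (simp add: T_measure)
  also have "\<dots> = measure lborel (\<Union>j\<in>{..<M}. T j)"
  proof (rule measure_finite_Union[symmetric])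
    show "T ` {..<M} \<subseteq> sets lborel" using Tm by auto
    show "disjoint_family_on T {..<M}" by (rule disj)
    fix j :: nat assume jM: "j \<in> {..<M}"
    have "emeasure lborel (T j) \<le> emeasure lborel (ball (0::complex^'n) 2)"
      using Un Tm jM by (intro emeasure_mono) auto
    then show "emeasure lborel (T j) \<noteq> \<infinity>"
      using emeasure_lborel_ball_finite[of "0::complex^'n" 2] by (auto simp: top_unique)
  qed simp
  also have "\<dots> \<le> measure lborel (ball (0::complex^'n) 2)"
    by (rule measure_mono_fmeasurable[OF Un]) (use Tm ball2_fm in auto)
  also have "\<dots> = 2 ^ DIM(complex^'n) * measure lborel (ball (0::complex^'n) 1)"
    by (rule content_ball_conv_unit_ball) simp
  finally show ?thesis unfolding Q_def .
qed

lemma sphere_measure_cap_upper: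
  assumes \<zeta>: "norm \<zeta> = 1" and \<tau>: "0 < \<tau>"
  shows "emeasure (sphere_measure :: (complex^'n) measure) {z \<in> unit_sphere. cmod (1 - cinner z \<zeta>) < \<tau>}
           \<le> ennreal (4 * 2^DIM(complex^'n) * \<tau>)"
proof (cases "\<tau> \<le> 1/4")
  case False
  have m: "{z \<in> unit_sphere. cmod (1 - cinner z \<zeta>) < \<tau>} \<in> sets borel" by measurable
  have "1 * 1 \<le> (2::real)^DIM(complex^'n) * (4 * \<tau>)" using False by (intro mult_mono) auto
  then have "ennreal 1 \<le> ennreal (4 * 2^DIM(complex^'n) * \<tau>)" by (intro ennreal_leI) (simp add: mult_ac)
  moreover have "emeasure sphere_measure {z \<in> unit_sphere. cmod (1 - cinner z \<zeta>) < \<tau>} \<le> ennreal 1"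
    using sphere_measure_le_1[OF m] by simp
  ultimately show ?thesis by (rule order.trans[rotated])
next
  case True
  let ?d = "DIM(complex^'n)"
  let ?cap = "{z \<in> unit_sphere. cmod (1 - cinner z \<zeta>) < \<tau>}"
  let ?Q = "{x \<in> ball (0::complex^'n) 1. \<bar>Im (cinner x \<zeta>)\<bar> < \<tau>}"
  have capm: "?cap \<in> sets borel" by measurable
  define M where "M = nat \<lfloor>1 / (2 * \<tau>)\<rfloor>"
  have Mf: "real M = of_int \<lfloor>1 / (2 * \<tau>)\<rfloor>" unfolding M_def using \<tau> by simp
  have "real M \<le> 1 / (2 * \<tau>)" unfolding Mf by (rule of_int_floor_le)
  then have M1: "2 * \<tau> * real M \<le> 1" using \<tau> by (simp add: field_simps)
  have M2: "real M \<ge> 1 / (4 * \<tau>)"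
  proof -
    have "1 / (2 * \<tau>) - 1 \<le> real M" unfolding Mf by linarith
    moreover have "1 / (4 * \<tau>) \<le> 1 / (2 * \<tau>) - 1" using \<tau> True by (simp add: field_simps)
    ultimately show ?thesis by linarith
  qed
  have "1 / (4 * \<tau>) > 0" using \<tau> by simp
  then have Mpos: "real M > 0" using M2 by linarith
  have Qfm: "?Q \<in> fmeasurable lborel"
    by (rule fmeasurableI2[of "ball 0 1"]) (auto simp: fmeasurable_def
        emeasure_lborel_ball_finite[unfolded infinity_ennreal_def])
  have "measure lborel ((\<lambda>x. x /\<^sub>R norm x) -` ?cap \<inter> ball 0 1) \<le> measure lborel ?Q"
    by (rule measure_mono_fmeasurable[OF radial_cone_subset_slab[OF \<zeta>]])
       (use radial_preimage_fmeasurable[OF capm] Qfm in auto)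
  also have "\<dots> \<le> 2 ^ ?d * measure lborel (ball (0::complex^'n) 1) / real M"
    using slab_volume_upper[OF \<zeta> \<tau> M1] Mpos by (simp add: le_divide_eq mult.commute)
  also have "\<dots> \<le> 2 ^ ?d * measure lborel (ball (0::complex^'n) 1) * (4 * \<tau>)"
  proof -
    have "1 / real M \<le> 4 * \<tau>" using M2 Mpos \<tau> by (simp add: field_simps)
    then show ?thesis using unit_ball_volume_pos[where 'n='n]
      by (metis divide_inverse inverse_eq_divide mult_left_mono less_imp_le mult_nonneg_nonneg
          zero_le_numeral zero_le_power)
  qed
  finally have "measure lborel ((\<lambda>x. x /\<^sub>R norm x) -` ?cap \<inter> ball 0 1)
      / measure lborel (ball (0::complex^'n) 1) \<le> 4 * 2 ^ ?d * \<tau>"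
    using unit_ball_volume_pos[where 'n='n] by (simp add: divide_le_eq mult_ac)
  then show ?thesis unfolding sphere_measure_eq[OF capm] by (rule ennreal_leI)
qed


section \<open>The Luxemburg norm\<close>

lemma orlicz_set_mem: "C \<in> orlicz_set \<psi> h \<longleftrightarrow> C > 0 \<and>
     (\<integral>\<^sup>+ \<zeta>. ennreal (\<psi> (cmod (h \<zeta>) / C)) * indicator unit_sphere \<zeta> \<partial>sphere_measure) \<le> 1"
  unfolding orlicz_set_def by simp

lemma orlicz_set_pos: "C \<in> orlicz_set \<psi> h \<Longrightarrow> C > 0"
  using orlicz_set_mem by blast

lemma orlicz_set_upward:
  assumes o: "orlicz_function \<psi>" and C: "C \<in> orlicz_set \<psi> h" and le: "C \<le> C'"
  shows "C' \<in> orlicz_set \<psi> h"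
proof -
  have C0: "C > 0" using C orlicz_set_pos by blast
  have "(\<integral>\<^sup>+ \<zeta>. ennreal (\<psi> (cmod (h \<zeta>) / C')) * indicator unit_sphere \<zeta> \<partial>sphere_measure)
     \<le> (\<integral>\<^sup>+ \<zeta>. ennreal (\<psi> (cmod (h \<zeta>) / C)) * indicator unit_sphere \<zeta> \<partial>sphere_measure)"
    using C0 le
    by (intro nn_integral_mono mult_right_mono ennreal_leI orlicz_mono[OF o])
       (auto intro!: divide_left_mono)
  then show ?thesis using C C0 le unfolding orlicz_set_mem by auto
qed

lemma lux_norm_le: "C \<in> orlicz_set \<psi> h \<Longrightarrow> lux_norm \<psi> h \<le> C"
  unfolding lux_norm_def
  by (rule cInf_lower)
     (auto simp: bdd_below_def intro!: exI[of _ 0] dest: orlicz_set_pos intro: less_imp_le)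

lemma lux_norm_less_imp_mem:
  assumes o: "orlicz_function \<psi>" and ne: "orlicz_set \<psi> h \<noteq> {}" and l: "lux_norm \<psi> h < c"
  shows "c \<in> orlicz_set \<psi> h"
proof -
  obtain x where "x \<in> orlicz_set \<psi> h" "x < c"
    using cInf_lessD[OF ne] l unfolding lux_norm_def by blast
  then show ?thesis using orlicz_set_upward[OF o] by (meson less_imp_le)
qed

lemma orlicz_integrand_measurable:
  assumes o: "orlicz_function \<psi>" and f: "continuous_on unit_sphere f" and C0: "C > 0"
  shows "(\<lambda>\<zeta>. ennreal (\<psi> (cmod (f \<zeta>) / C)) * indicator unit_sphere \<zeta>)
           \<in> borel_measurable (sphere_measure :: (complex^'n) measure)"
proof -
  define p where "p = (\<lambda>x. \<psi> (max x 0))"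
  have "mono p" unfolding p_def mono_def by (auto intro!: orlicz_mono[OF o])
  then have pm: "p \<in> borel_measurable borel" by (rule borel_measurable_mono)
  have [measurable]: "unit_sphere \<in> sets borel" by (simp add: borel_closed)
  have fm: "(\<lambda>x. indicator unit_sphere x *\<^sub>R f x) \<in> borel_measurable borel"
    by (rule borel_measurable_continuous_on_indicator) (auto simp: f)
  have eq: "(\<lambda>\<zeta>. ennreal (\<psi> (cmod (f \<zeta>) / C)) * indicator unit_sphere \<zeta>)
      = (\<lambda>\<zeta>. ennreal (p (cmod (indicator unit_sphere \<zeta> *\<^sub>R f \<zeta>) / C)) * indicator unit_sphere \<zeta>)"
    using C0 by (auto simp: p_def indicator_def fun_eq_iff)
  have "(\<lambda>\<zeta>. ennreal (p (cmod (indicator unit_sphere \<zeta> *\<^sub>R f \<zeta>) / C)) * indicator unit_sphere \<zeta>)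
      \<in> borel_measurable borel"
    using pm fm by measurable
  then show ?thesis unfolding eq measurable_sphere_measure_iff .
qed

text \<open>A quantitative triangle inequality: a common admissible constant \<open>C\<close> for \<open>f\<^sub>1\<close> and \<open>f\<^sub>2\<close>
  gives the admissible constant \<open>2C\<close> for \<open>f\<^sub>1 - f\<^sub>2\<close> (convexity of \<open>\<psi>\<close>).\<close>

lemma orlicz_set_diff:
  assumes o: "orlicz_function \<psi>"
    and f1: "continuous_on unit_sphere f1" and f2: "continuous_on unit_sphere f2"
    and C1: "C \<in> orlicz_set \<psi> f1" and C2: "C \<in> orlicz_set \<psi> f2"
  shows "2 * C \<in> orlicz_set \<psi> (\<lambda>z. f1 z - f2 z)"
proof -
  have C0: "C > 0" using C1 orlicz_set_pos by blast
  let ?I = "\<lambda>f \<zeta>. ennreal (\<psi> (cmod (f \<zeta>) / C)) * indicator unit_sphere \<zeta>"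
  have pt: "ennreal (\<psi> (cmod (f1 \<zeta> - f2 \<zeta>) / (2 * C))) * indicator unit_sphere \<zeta>
      \<le> ennreal (1/2) * (?I f1 \<zeta> + ?I f2 \<zeta>)" for \<zeta>
  proof -
    have p1: "\<psi> (cmod (f1 \<zeta>) / C) \<ge> 0" "\<psi> (cmod (f2 \<zeta>) / C) \<ge> 0"
      using C0 orlicz_nonneg[OF o] by auto
    have "\<psi> (cmod (f1 \<zeta> - f2 \<zeta>) / (2 * C)) \<le> \<psi> ((cmod (f1 \<zeta>) / C + cmod (f2 \<zeta>) / C) / 2)"
      using C0 norm_triangle_ineq4[of "f1 \<zeta>" "f2 \<zeta>"]
      by (intro orlicz_mono[OF o]) (auto simp: field_simps)
    also have "\<dots> \<le> 1/2 * (\<psi> (cmod (f1 \<zeta>) / C) + \<psi> (cmod (f2 \<zeta>) / C))"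
      using C0 orlicz_midpoint[OF o] by simp
    finally have "ennreal (\<psi> (cmod (f1 \<zeta> - f2 \<zeta>) / (2 * C)))
        \<le> ennreal (1/2 * (\<psi> (cmod (f1 \<zeta>) / C) + \<psi> (cmod (f2 \<zeta>) / C)))"
      by (rule ennreal_leI)
    also have "\<dots> = ennreal (1/2) * (ennreal (\<psi> (cmod (f1 \<zeta>) / C)) + ennreal (\<psi> (cmod (f2 \<zeta>) / C)))"
      using p1 by (subst ennreal_mult) (auto simp del: ennreal_plus simp add: ennreal_plus[symmetric])
    finally show ?thesis by (auto simp: indicator_def)
  qed
  have "(\<integral>\<^sup>+ \<zeta>. ennreal (\<psi> (cmod (f1 \<zeta> - f2 \<zeta>) / (2 * C))) * indicator unit_sphere \<zeta> \<partial>sphere_measure)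
      \<le> (\<integral>\<^sup>+ \<zeta>. ennreal (1/2) * (?I f1 \<zeta> + ?I f2 \<zeta>) \<partial>sphere_measure)"
    by (rule nn_integral_mono) (rule pt)
  also have "\<dots> = ennreal (1/2) *
      ((\<integral>\<^sup>+ \<zeta>. ?I f1 \<zeta> \<partial>sphere_measure) + (\<integral>\<^sup>+ \<zeta>. ?I f2 \<zeta> \<partial>sphere_measure))"
    using orlicz_integrand_measurable[OF o f1 C0] orlicz_integrand_measurable[OF o f2 C0]
    by (simp add: nn_integral_cmult nn_integral_add)
  also have "\<dots> \<le> ennreal (1/2) * (1 + 1)"
    using C1 C2 unfolding orlicz_set_mem by (intro mult_left_mono add_mono) auto
  also have "\<dots> = 1" using ennreal_mult[of "1/2" 2] by simp
  finally show ?thesis using C0 unfolding orlicz_set_mem by simp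
qed

lemma orlicz_integral_cap_lower:
  assumes o: "orlicz_function \<psi>" and \<zeta>: "norm \<zeta> = 1" and s: "0 < s" "s \<le> 1"
    and c: "c > 0" and K: "K \<ge> 0"
    and D: "\<And>x. x \<in> unit_sphere \<inter> ball \<zeta> s \<Longrightarrow> K \<le> cmod (D x) / c"
  shows "(\<integral>\<^sup>+ x. ennreal (\<psi> (cmod (D x) / c)) * indicator unit_sphere x
            \<partial>(sphere_measure :: (complex^'n) measure))
          \<ge> ennreal (\<psi> K * (s/4)^DIM(complex^'n))"
proof -
  have Em: "unit_sphere \<inter> ball \<zeta> s \<in> sets borel" by (simp add: borel_closed)
  have pK: "\<psi> K \<ge> 0" using orlicz_nonneg[OF o K] .
  have pt: "ennreal (\<psi> K) * indicator (unit_sphere \<inter> ball \<zeta> s) x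
      \<le> ennreal (\<psi> (cmod (D x) / c)) * indicator unit_sphere x" for x
  proof (cases "x \<in> unit_sphere \<inter> ball \<zeta> s")
    case True
    have "\<psi> K \<le> \<psi> (cmod (D x) / c)" using D[OF True] K by (intro orlicz_mono[OF o]) auto
    then show ?thesis using True by (simp add: ennreal_leI)
  qed simp
  have "ennreal (\<psi> K * (s/4)^DIM(complex^'n)) = ennreal (\<psi> K) * ennreal ((s/4)^DIM(complex^'n))"
    using pK s by (simp add: ennreal_mult)
  also have "\<dots> \<le> ennreal (\<psi> K) * emeasure (sphere_measure :: (complex^'n) measure) (unit_sphere \<inter> ball \<zeta> s)"
    by (intro mult_left_mono sphere_measure_cap_lower[OF \<zeta> s]) auto
  also have "\<dots> = (\<integral>\<^sup>+ x. ennreal (\<psi> K) * indicator (unit_sphere \<inter> ball \<zeta> s) x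
      \<partial>(sphere_measure :: (complex^'n) measure))"
    using Em by (simp add: nn_integral_cmult_indicator)
  also have "\<dots> \<le> (\<integral>\<^sup>+ x. ennreal (\<psi> (cmod (D x) / c)) * indicator unit_sphere x
      \<partial>(sphere_measure :: (complex^'n) measure))"
    by (rule nn_integral_mono) (rule pt)
  finally show ?thesis .
qed


section \<open>Hardy--Orlicz norms and a criterion for non-compactness\<close>

lemma holo_fun_continuous: "holo_fun f (ball (0::complex^'n) 1) \<Longrightarrow> continuous_on (ball 0 1) f"
  unfolding holo_fun_def by (metis continuous_at_imp_continuous_on has_derivative_continuous)

lemma hardy_orlicz_continuous: "f \<in> hardy_orlicz \<psi> \<Longrightarrow> continuous_on (ball (0::complex^'n) 1) f"
  unfolding hardy_orlicz_def using holo_fun_continuous by blast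

lemma dilate_continuous:
  assumes "continuous_on (ball (0::complex^'n) 1) f" "r \<in> {0<..<1}"
  shows "continuous_on unit_sphere (dilate f r)"
  unfolding dilate_def
proof (rule continuous_on_compose2[OF assms(1)])
  show "continuous_on unit_sphere (\<lambda>x::complex^'n. r *\<^sub>R x)" by (intro continuous_intros)
  show "(\<lambda>x. r *\<^sub>R x) ` unit_sphere \<subseteq> ball 0 1" using assms by auto
qed

lemma hardy_orlicz_uniform_constant:
  assumes o: "orlicz_function \<psi>" and f: "f \<in> hardy_orlicz \<psi>"
  shows "\<exists>M>0. \<forall>r\<in>{0<..<1}. M \<in> orlicz_set \<psi> (dilate f r)"
proof -
  obtain M where M: "\<forall>r\<in>{0<..<1}. orlicz_set \<psi> (dilate f r) \<noteq> {} \<and> lux_norm \<psi> (dilate f r) \<le> M"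
    using f unfolding hardy_orlicz_def by blast
  have "(1/2::real) \<in> {0<..<1}" by simp
  then obtain x where x: "x \<in> orlicz_set \<psi> (dilate f (1/2))" "lux_norm \<psi> (dilate f (1/2)) \<le> M"
    using M by blast
  have "0 \<le> lux_norm \<psi> (dilate f (1/2))" unfolding lux_norm_def
    using x(1) by (intro cInf_greatest) (auto dest: orlicz_set_pos intro: less_imp_le)
  then have Mp: "M \<ge> 0" using x by simp
  have "M + 1 \<in> orlicz_set \<psi> (dilate f r)" if r: "r \<in> {0<..<1}" for r
  proof -
    have "orlicz_set \<psi> (dilate f r) \<noteq> {} \<and> lux_norm \<psi> (dilate f r) \<le> M" using M r by blast
    then show ?thesis by (intro lux_norm_less_imp_mem[OF o]) auto
  qed
  then show ?thesis using Mp by (intro exI[of _ "M + 1"]) auto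
qed

lemma hardy_orlicz_diff_constant:
  assumes o: "orlicz_function \<psi>" and f1: "f1 \<in> hardy_orlicz \<psi>" and f2: "f2 \<in> hardy_orlicz \<psi>"
  shows "\<exists>M. \<forall>r\<in>{0<..<1}. M \<in> orlicz_set \<psi> (dilate (\<lambda>z. f1 z - f2 z) r)"
proof -
  obtain M1 where M1: "\<forall>r\<in>{0<..<1}. M1 \<in> orlicz_set \<psi> (dilate f1 r)"
    using hardy_orlicz_uniform_constant[OF o f1] by blast
  obtain M2 where M2: "\<forall>r\<in>{0<..<1}. M2 \<in> orlicz_set \<psi> (dilate f2 r)"
    using hardy_orlicz_uniform_constant[OF o f2] by blast
  have "2 * max M1 M2 \<in> orlicz_set \<psi> (dilate (\<lambda>z. f1 z - f2 z) r)" if r: "r \<in> {0<..<1}" for r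
  proof -
    have "2 * max M1 M2 \<in> orlicz_set \<psi> (\<lambda>z. dilate f1 r z - dilate f2 r z)"
      using r M1 M2 hardy_orlicz_continuous[OF f1] hardy_orlicz_continuous[OF f2]
      by (intro orlicz_set_diff[OF o] dilate_continuous
          orlicz_set_upward[OF o _ max.cobounded1] orlicz_set_upward[OF o _ max.cobounded2]) auto
    then show ?thesis unfolding dilate_def by simp
  qed
  then show ?thesis by blast
qed

lemma ho_norm_ge_lux_norm:
  assumes "\<forall>r\<in>{0<..<1}. M \<in> orlicz_set \<psi> (dilate h r)" and r: "r \<in> {0<..<1}"
  shows "lux_norm \<psi> (dilate h r) \<le> ho_norm \<psi> h"
proof -
  have "\<forall>x\<in>{0<..<1}. lux_norm \<psi> (dilate h x) \<le> M" using assms(1) lux_norm_le by blast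
  then show ?thesis unfolding ho_norm_def by (intro cSUP_upper[OF r]) (auto simp: bdd_above_def)
qed

lemma ho_norm_le:
  assumes "\<forall>r\<in>{0<..<1}. M \<in> orlicz_set \<psi> (dilate h r)"
  shows "ho_norm \<psi> h \<le> M"
proof -
  have "\<forall>x\<in>{0<..<1}. lux_norm \<psi> (dilate h x) \<le> M" using assms(1) lux_norm_le by blast
  then show ?thesis unfolding ho_norm_def by (intro cSUP_least) auto
qed

text \<open>Non-compactness criterion: an operator is not compact on \<open>H\<^sup>\<psi>\<close> if it maps a bounded
  sequence to a sequence that is uniformly separated along some dilates.  (If a subsequence
  of the images converged to \<open>g\<close>, consecutive terms would be close to each other.)\<close>

lemma not_compact_if_separated:
  fixes T :: "(complex^'n \<Rightarrow> complex) \<Rightarrow> (complex^'n \<Rightarrow> complex)"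
    and F :: "nat \<Rightarrow> (complex^'n \<Rightarrow> complex)"
  assumes o: "orlicz_function \<psi>"
    and F: "\<And>j. F j \<in> hardy_orlicz \<psi>" and bounded: "\<And>j. ho_norm \<psi> (F j) \<le> M"
    and c: "c > 0"
    and separated: "\<And>i j. i < j \<Longrightarrow>
         \<exists>r\<in>{0<..<1}. c \<notin> orlicz_set \<psi> (dilate (\<lambda>z. T (F j) z - T (F i) z) r)"
  shows "\<not> compact_op_ho \<psi> T"
proof
  assume comp: "compact_op_ho \<psi> T"
  then have TF: "T (F j) \<in> hardy_orlicz \<psi>" for j using F unfolding compact_op_ho_def by blast
  obtain s g where s: "strict_mono s" and g: "g \<in> hardy_orlicz \<psi>"
    and lim: "(\<lambda>k. ho_norm \<psi> (\<lambda>z. T (F (s k)) z - g z)) \<longlonglongrightarrow> 0"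
    using comp F bounded unfolding compact_op_ho_def by meson
  define h where "h k = (\<lambda>z. T (F (s k)) z - g z)" for k
  have "\<forall>\<^sub>F k in sequentially. ho_norm \<psi> (h k) < c / 2"
    using order_tendstoD(2)[OF lim, of "c / 2"] c unfolding h_def by simp
  then obtain N where N: "\<And>k. k \<ge> N \<Longrightarrow> ho_norm \<psi> (h k) < c / 2"
    unfolding eventually_sequentially by blast
  have close: "c / 2 \<in> orlicz_set \<psi> (dilate (h k) r)" if k: "k \<ge> N" and r: "r \<in> {0<..<1}" for k r
  proof -
    obtain M' where M': "\<forall>r\<in>{0<..<1}. M' \<in> orlicz_set \<psi> (dilate (h k) r)"
      using hardy_orlicz_diff_constant[OF o TF g] unfolding h_def by blast
    have "lux_norm \<psi> (dilate (h k) r) \<le> ho_norm \<psi> (h k)" by (rule ho_norm_ge_lux_norm[OF M' r])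
    also have "\<dots> < c / 2" using N[OF k] .
    finally show ?thesis using M' r by (intro lux_norm_less_imp_mem[OF o]) auto
  qed
  have hcont: "continuous_on (ball 0 1) (h k)" for k
    unfolding h_def using hardy_orlicz_continuous[OF TF] hardy_orlicz_continuous[OF g]
    by (intro continuous_on_diff) auto
  obtain r where r: "r \<in> {0<..<1}"
    and far: "c \<notin> orlicz_set \<psi> (dilate (\<lambda>z. T (F (s (Suc N))) z - T (F (s N)) z) r)"
    using separated[of "s N" "s (Suc N)"] s by (auto simp: strict_mono_def)
  have "2 * (c / 2) \<in> orlicz_set \<psi> (\<lambda>z. dilate (h (Suc N)) r z - dilate (h N) r z)"
    using r close by (intro orlicz_set_diff[OF o] dilate_continuous[OF hcont]) auto
  then show False using far unfolding dilate_def h_def by simp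
qed


section \<open>Holomorphic slice functions\<close>

lemma slice_has_derivative:
  assumes "(g has_field_derivative D) (at (cinner z \<zeta>))"
  shows "((\<lambda>z. g (cinner z \<zeta>)) has_derivative (\<lambda>h. D * cinner h \<zeta>)) (at z)"
  using has_derivative_compose[OF bounded_linear_imp_has_derivative[OF bounded_linear_cinner]
      has_field_derivative_imp_has_derivative[OF assms]] by simp

lemma holo_fun_slice:
  assumes "\<And>z. z \<in> ball (0::complex^'n) 1 \<Longrightarrow> g field_differentiable (at (cinner z \<zeta>))"
  shows "holo_fun (\<lambda>z. g (cinner z \<zeta>)) (ball (0::complex^'n) 1)"
  unfolding holo_fun_def
proof (intro conjI ballI open_ball)
  fix z :: "complex^'n" assume z: "z \<in> ball 0 1"
  obtain D where D: "(g has_field_derivative D) (at (cinner z \<zeta>))"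
    using assms[OF z] unfolding field_differentiable_def by blast
  have "\<forall>c x. D * cinner (c *s x) \<zeta> = c * (D * cinner x \<zeta>)" by (simp add: cinner_smult_left)
  then show "\<exists>L. ((\<lambda>z. g (cinner z \<zeta>)) has_derivative L) (at z) \<and> (\<forall>c x. L (c *s x) = c * L x)"
    using slice_has_derivative[OF D] by blast
qed

lemma holo_map_slice:
  assumes "\<And>z. z \<in> ball (0::complex^'n) 1 \<Longrightarrow> g field_differentiable (at (cinner z \<zeta>))"
  shows "holo_map (\<lambda>z. g (cinner z \<zeta>) *s \<zeta>) (ball (0::complex^'n) 1)"
  unfolding holo_map_def
proof (intro conjI ballI open_ball)
  fix z :: "complex^'n" assume z: "z \<in> ball 0 1"
  obtain D where D: "(g has_field_derivative D) (at (cinner z \<zeta>))"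
    using assms[OF z] unfolding field_differentiable_def by blast
  have "((\<lambda>z. g (cinner z \<zeta>) *s \<zeta>) has_derivative (\<lambda>h. (D * cinner h \<zeta>) *s \<zeta>)) (at z)"
    by (rule bounded_linear.has_derivative[OF bounded_linear_smult_const slice_has_derivative[OF D]])
  moreover have "\<forall>c x. (D * cinner (c *s x) \<zeta>) *s \<zeta> = c *s ((D * cinner x \<zeta>) *s \<zeta>)"
    by (simp add: cinner_smult_left vec_eq_iff mult_ac)
  ultimately show "\<exists>L. ((\<lambda>z. g (cinner z \<zeta>) *s \<zeta>) has_derivative L) (at z) \<and>
      (\<forall>c x. L (c *s x) = c *s L x)"
    by blast
qed


section \<open>The symbol\<close>

text \<open>Since \<open>(1 - v)/2\<close> lies in the
  right half plane, \<open>((1 - v)/2)^\<alpha>\<close> lies in the sector \<open>|arg| < \<alpha>\<pi>/2\<close>; this is what pushes the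
  image into an approach region at 1.\<close>

definition stolz_map :: "real \<Rightarrow> real \<Rightarrow> complex \<Rightarrow> complex" where
  "stolz_map \<alpha> \<epsilon> v = 1 - of_real \<epsilon> * exp (of_real \<alpha> * Ln ((1 - v) / 2))"

lemma stolz_map_field_differentiable:
  assumes v: "cmod v < 1"
  shows "stolz_map \<alpha> \<epsilon> field_differentiable (at v)"
proof -
  have "stolz_map \<alpha> \<epsilon> holomorphic_on ball 0 1"
    unfolding stolz_map_def
  proof (intro holomorphic_intros)
    fix v :: complex assume v: "v \<in> ball 0 1"
    have "Re v < 1" using v abs_Re_le_cmod[of v] by auto
    then show "(1 - v) / 2 \<notin> \<real>\<^sub>\<le>\<^sub>0" by (auto simp: complex_nonpos_Reals_iff)
  qed simp
  then show ?thesis by (rule holomorphic_on_imp_differentiable_at) (use v in auto)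
qed

lemma half_plane_power:
  assumes v: "cmod v < 1" and \<alpha>: "0 < \<alpha>" "\<alpha> \<le> 1"
  defines "p \<equiv> exp (of_real \<alpha> * Ln ((1 - v) / 2))"
  shows "0 < cmod p" and "cmod p \<le> 1" and "cmod p \<le> cmod (1 - v) powr \<alpha>"
    and "cmod p * cos (\<alpha> * pi / 2) \<le> Re p"
proof -
  define q where "q = (1 - v) / 2"
  have Req: "Re q > 0" unfolding q_def using v abs_Re_le_cmod[of v] by auto
  have q0: "cmod q > 0" using Req by auto
  have "cmod (1 - v) \<le> 1 + cmod v" using norm_triangle_ineq4[of 1 v] by simp
  then have q1: "cmod q < 1" unfolding q_def using v by (simp add: norm_divide)
  define L where "L = Ln q"
  have ImL: "\<bar>Im L\<bar> < pi / 2" unfolding L_def by (rule Re_Ln_pos_lt_imp[OF Req])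
  have cp: "cmod p = cmod q powr \<alpha>" unfolding p_def q_def[symmetric] using q0 by (simp add: powr_def)
  show "0 < cmod p" unfolding cp using q0 by simp
  show "cmod p \<le> 1" unfolding cp using q1 q0 \<alpha> by (intro powr_le1) auto
  show "cmod p \<le> cmod (1 - v) powr \<alpha>"
    unfolding cp q_def using \<alpha> by (intro powr_mono2) (auto simp: norm_divide)
  have a: "\<bar>\<alpha> * Im L\<bar> \<le> \<alpha> * pi / 2" using ImL \<alpha> by (simp add: abs_mult mult_left_mono less_imp_le)
  have "\<alpha> * pi / 2 \<le> pi" using \<alpha> by (simp add: mult_left_le_one_le pi_gt_zero less_imp_le)
  then have b: "\<bar>\<alpha> * Im L\<bar> \<le> pi" using a by linarith
  then have "cos (\<alpha> * pi / 2) \<le> cos \<bar>\<alpha> * Im L\<bar>" using a b \<alpha> by (subst cos_mono_le_eq) auto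
  moreover have "Re p = cmod p * cos (\<alpha> * Im L)" unfolding p_def L_def q_def by (simp add: Re_exp)
  ultimately show "cmod p * cos (\<alpha> * pi / 2) \<le> Re p"
    using \<open>0 < cmod p\<close> by (simp add: mult_left_mono)
qed

lemma stolz_map_estimates:
  assumes v: "cmod v < 1" and \<alpha>: "0 < \<alpha>" "\<alpha> \<le> 1" and \<epsilon>: "0 < \<epsilon>" "\<epsilon> \<le> 1"
    and \<kappa>: "cos (\<alpha> * pi / 2) \<ge> \<kappa>"
  shows "cmod (1 - stolz_map \<alpha> \<epsilon> v) \<le> cmod (1 - v) powr \<alpha>"
    and "cmod (1 - stolz_map \<alpha> \<epsilon> v) > 0"
    and "1 - (cmod (stolz_map \<alpha> \<epsilon> v))\<^sup>2 \<ge> cmod (1 - stolz_map \<alpha> \<epsilon> v) * (2 * \<kappa> - \<epsilon>)"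
proof -
  define p where "p = exp (of_real \<alpha> * Ln ((1 - v) / 2))"
  note p = half_plane_power[OF v \<alpha>, folded p_def]
  have u: "stolz_map \<alpha> \<epsilon> v = 1 - of_real \<epsilon> * p" unfolding stolz_map_def p_def by simp
  have cd: "cmod (1 - stolz_map \<alpha> \<epsilon> v) = \<epsilon> * cmod p" unfolding u using \<epsilon> by (simp add: norm_mult)
  have "\<epsilon> * cmod p \<le> cmod p" using \<epsilon> p(1) by (simp add: mult_left_le_one_le)
  then show "cmod (1 - stolz_map \<alpha> \<epsilon> v) \<le> cmod (1 - v) powr \<alpha>" unfolding cd using p(3) by linarith
  show "cmod (1 - stolz_map \<alpha> \<epsilon> v) > 0" unfolding cd using \<epsilon> p(1) by simp
  have sq: "(cmod (stolz_map \<alpha> \<epsilon> v))\<^sup>2 = 1 - 2 * \<epsilon> * Re p + \<epsilon>\<^sup>2 * (cmod p)\<^sup>2"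
    unfolding u cmod_power2 by (simp add: power2_eq_square algebra_simps)
  have "cmod p * \<kappa> \<le> Re p" using p(1,4) \<kappa> by (smt (verit) mult_left_mono)
  moreover have "cmod p * cmod p \<le> cmod p" using p(1,2) by (simp add: mult_left_le_one_le)
  ultimately have "2 * \<epsilon> * (cmod p * \<kappa>) - \<epsilon> * \<epsilon> * cmod p \<le> 2 * \<epsilon> * Re p - \<epsilon> * \<epsilon> * (cmod p * cmod p)"
    using \<epsilon> by (smt (verit, best) mult_left_mono mult_pos_pos)
  then show "1 - (cmod (stolz_map \<alpha> \<epsilon> v))\<^sup>2 \<ge> cmod (1 - stolz_map \<alpha> \<epsilon> v) * (2 * \<kappa> - \<epsilon>)"
    unfolding cd sq by (simp add: power2_eq_square algebra_simps)
qed

lemma small_angle_exists: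
  assumes "\<kappa> < 1"
  obtains \<alpha> :: real where "0 < \<alpha>" "\<alpha> \<le> 1" "cos (\<alpha> * pi / 2) \<ge> \<kappa>"
proof -
  have "isCont (\<lambda>x::real. cos (x * pi / 2)) 0" by (intro continuous_intros) auto
  then have "((\<lambda>x::real. cos (x * pi / 2)) \<longlongrightarrow> 1) (at 0)" unfolding isCont_def by simp
  then have "\<forall>\<^sub>F x in at 0. \<kappa> < cos (x * pi / 2)" using order_tendstoD(1)[OF _ assms] by blast
  then obtain e where e: "e > 0" "\<And>x. x \<noteq> 0 \<Longrightarrow> dist x 0 < e \<Longrightarrow> \<kappa> < cos (x * pi / 2)"
    unfolding eventually_at by auto
  have "min (e/2) 1 \<noteq> 0" "dist (min (e/2) 1) 0 < e" using e(1) by auto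
  then show ?thesis using that[of "min (e/2) 1"] e(1) e(2)[of "min (e/2) 1"] by auto
qed

lemma stolz_symbol_exists:
  assumes b: "b > 1"
  obtains \<alpha> :: real and U :: "complex \<Rightarrow> complex"
  where "0 < \<alpha>" "\<alpha> \<le> 1"
    and "\<And>v. cmod v < 1 \<Longrightarrow> U field_differentiable (at v)"
    and "\<And>v. cmod v < 1 \<Longrightarrow> cmod (1 - U v) \<le> cmod (1 - v) powr \<alpha>"
    and "\<And>v. cmod v < 1 \<Longrightarrow> cmod (U v) < 1 \<and> cmod (1 - U v) < b / 2 * (1 - (cmod (U v))\<^sup>2)"
proof -
  define \<kappa> where "\<kappa> = (1 + 1/b) / 2"
  define \<epsilon> where "\<epsilon> = (1 - 1/b) / 2"
  have ib: "0 < 1/b" "1/b < 1" using b by auto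
  have \<kappa>1: "\<kappa> < 1" and \<epsilon>: "0 < \<epsilon>" "\<epsilon> \<le> 1"
    unfolding \<kappa>_def \<epsilon>_def using ib by (simp_all add: field_simps)
  have gap: "2 * \<kappa> - \<epsilon> = 1/2 + 3/2 * (1/b)" unfolding \<kappa>_def \<epsilon>_def by (simp add: field_simps)
  then have pos: "2 * \<kappa> - \<epsilon> > 0" using ib by linarith
  have "b * (2 * \<kappa> - \<epsilon>) = b / 2 + 3 / 2" using b gap by (simp add: field_simps)
  then have key: "b * (2 * \<kappa> - \<epsilon>) / 2 > 1" using b by simp
  obtain \<alpha> where \<alpha>: "0 < \<alpha>" "\<alpha> \<le> 1" "cos (\<alpha> * pi / 2) \<ge> \<kappa>" using small_angle_exists[OF \<kappa>1] .
  define U where "U = stolz_map \<alpha> \<epsilon>"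
  have Stolz: "cmod (U v) < 1 \<and> cmod (1 - U v) < b / 2 * (1 - (cmod (U v))\<^sup>2)"
    if v: "cmod v < 1" for v
  proof -
    have p2: "cmod (1 - U v) > 0" and p3: "1 - (cmod (U v))\<^sup>2 \<ge> cmod (1 - U v) * (2 * \<kappa> - \<epsilon>)"
      using stolz_map_estimates[OF v \<alpha>(1,2) \<epsilon> \<alpha>(3)] unfolding U_def by auto
    have "(cmod (U v))\<^sup>2 < 1" using p3 p2 pos by (smt (verit) mult_pos_pos)
    then have "cmod (U v) < 1" using abs_square_less_1[of "cmod (U v)"] by simp
    moreover have "cmod (1 - U v) * 1 < cmod (1 - U v) * (b * (2 * \<kappa> - \<epsilon>) / 2)"
      using p2 key by (intro mult_strict_left_mono) auto
    moreover have "b / 2 * (cmod (1 - U v) * (2 * \<kappa> - \<epsilon>)) \<le> b / 2 * (1 - (cmod (U v))\<^sup>2)"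
      using p3 b by (intro mult_left_mono) auto
    ultimately show ?thesis by (simp add: mult_ac)
  qed
  show ?thesis
  proof (rule that[OF \<alpha>(1,2)])
    show "U field_differentiable (at v)" if "cmod v < 1" for v
      unfolding U_def using that by (rule stolz_map_field_differentiable)
    show "cmod (1 - U v) \<le> cmod (1 - v) powr \<alpha>" if "cmod v < 1" for v
      using stolz_map_estimates(1)[OF that \<alpha>(1,2) \<epsilon> \<alpha>(3)] unfolding U_def .
  qed (use Stolz in blast)
qed

lemma slice_map_into_koranyi:
  fixes \<zeta> :: "complex^'n"
  assumes \<zeta>: "norm \<zeta> = 1"
    and hol: "\<And>v. cmod v < 1 \<Longrightarrow> U field_differentiable (at v)"
    and Stolz: "\<And>v. cmod v < 1 \<Longrightarrow> cmod (U v) < 1 \<and> cmod (1 - U v) < b / 2 * (1 - (cmod (U v))\<^sup>2)"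
  shows "holo_map (\<lambda>z. U (cinner z \<zeta>) *s \<zeta>) (ball 0 1)"
    and "(\<lambda>z. U (cinner z \<zeta>) *s \<zeta>) ` ball 0 1 \<subseteq> ball 0 1"
    and "(\<lambda>z. U (cinner z \<zeta>) *s \<zeta>) ` ball 0 1 \<subseteq> koranyi \<zeta> b"
proof -
  have c\<phi>: "cinner (U (cinner z \<zeta>) *s \<zeta>) \<zeta> = U (cinner z \<zeta>)" for z
    by (simp add: cinner_smult_left cinner_unit_self[OF \<zeta>])
  have n\<phi>: "norm (U (cinner z \<zeta>) *s \<zeta>) = cmod (U (cinner z \<zeta>))" for z
    by (simp add: norm_smult_vec \<zeta>)
  show "holo_map (\<lambda>z. U (cinner z \<zeta>) *s \<zeta>) (ball 0 1)"
    by (rule holo_map_slice) (rule hol[OF cinner_ball_sphere[OF _ \<zeta>]])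
  show "(\<lambda>z. U (cinner z \<zeta>) *s \<zeta>) ` ball 0 1 \<subseteq> ball 0 1"
    using Stolz[OF cinner_ball_sphere[OF _ \<zeta>]] n\<phi> by auto
  show "(\<lambda>z. U (cinner z \<zeta>) *s \<zeta>) ` ball 0 1 \<subseteq> koranyi \<zeta> b"
    using Stolz[OF cinner_ball_sphere[OF _ \<zeta>]] n\<phi> c\<phi> unfolding koranyi_def by auto
qed


section \<open>Peak functions\<close>

definition peak_kernel :: "real \<Rightarrow> complex \<Rightarrow> complex" where
  "peak_kernel a w = of_real (1 - a) / (1 - of_real a * w)"

lemma norm_one_minus_of_real[simp]: "cmod (1 - complex_of_real a) = \<bar>1 - a\<bar>"
  by (metis norm_of_real of_real_1 of_real_diff)

lemma norm_one_minus_scaled: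
  fixes w :: complex
  assumes w: "cmod w \<le> 1" and c: "0 \<le> c" "c \<le> 1"
  shows "cmod (1 - of_real c * w) \<ge> 1 - c" and "cmod (1 - of_real c * w) \<ge> cmod (1 - w) / 2"
proof -
  have "cmod (of_real c * w) \<le> c" using w c by (simp add: norm_mult mult_right_le_one_le)
  moreover have "1 - cmod (of_real c * w) \<le> cmod (1 - of_real c * w)"
    using norm_triangle_ineq2[of 1 "of_real c * w"] by simp
  ultimately show l: "cmod (1 - of_real c * w) \<ge> 1 - c" by linarith
  have "of_real c * w - w = - (of_real (1 - c) * w)" by (simp add: algebra_simps)
  then have "cmod (of_real c * w - w) = (1 - c) * cmod w" using c by (simp add: norm_mult)
  also have "\<dots> \<le> 1 - c" using w c by (intro mult_right_le_one_le) auto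
  finally have "cmod (of_real c * w - w) \<le> 1 - c" .
  moreover have "cmod (1 - w) \<le> cmod (1 - of_real c * w) + cmod (of_real c * w - w)"
    using norm_triangle_ineq[of "1 - of_real c * w" "of_real c * w - w"] by simp
  ultimately show "cmod (1 - of_real c * w) \<ge> cmod (1 - w) / 2" using l by linarith
qed

lemma norm_peak_kernel: "a < 1 \<Longrightarrow> cmod (peak_kernel a w) = (1 - a) / cmod (1 - of_real a * w)"
  unfolding peak_kernel_def by (simp add: norm_divide)

lemma peak_kernel_le_1:
  assumes w: "cmod w \<le> 1" and a: "0 \<le> a" "a < 1"
  shows "cmod (peak_kernel a w) \<le> 1"
  using norm_one_minus_scaled(1)[OF w, of a] a by (simp add: norm_peak_kernel divide_le_eq_1)

lemma peak_kernel_le_far: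
  assumes w: "cmod w \<le> 1" and a: "0 \<le> a" "a < 1" and r: "0 \<le> r" "r \<le> 1" and w1: "w \<noteq> 1"
  shows "cmod (peak_kernel a (of_real r * w)) \<le> 2 * (1 - a) / cmod (1 - w)"
proof -
  have d: "cmod (1 - of_real (a * r) * w) \<ge> cmod (1 - w) / 2"
    using norm_one_minus_scaled(2)[OF w, of "a * r"] a r by (simp add: mult_le_one)
  have p: "cmod (1 - w) > 0" using w1 by simp
  have "cmod (peak_kernel a (of_real r * w)) = (1 - a) / cmod (1 - of_real (a * r) * w)"
    using a by (simp add: norm_peak_kernel mult.assoc)
  also have "\<dots> \<le> (1 - a) / (cmod (1 - w) / 2)"
    using d p a by (intro divide_left_mono mult_pos_pos) auto
  finally show ?thesis by (simp add: algebra_simps)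
qed

lemma peak_kernel_ge_half:
  assumes a: "0 \<le> a" "a < 1" and u: "cmod (1 - u) \<le> 1 - a"
  shows "cmod (peak_kernel a u) \<ge> 1/2"
proof -
  have e: "1 - of_real a * u = of_real (1 - a) + of_real a * (1 - u)" by (simp add: algebra_simps)
  have "cmod (1 - of_real a * u) \<le> (1 - a) + a * cmod (1 - u)"
    using norm_triangle_ineq[of "of_real (1 - a)" "of_real a * (1 - u)"] a
    unfolding e by (simp add: norm_mult)
  also have "\<dots> \<le> 2 * (1 - a)" using a u mult_left_le_one_le[of "cmod (1 - u)" a] by simp
  finally have up: "cmod (1 - of_real a * u) \<le> 2 * (1 - a)" .
  have "cmod u \<le> 2 - a" using norm_triangle_ineq4[of 1 "1 - u"] u by simp
  then have "cmod (of_real a * u) \<le> a * (2 - a)" using a by (simp add: norm_mult mult_left_mono)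
  moreover have "1 - cmod (of_real a * u) \<le> cmod (1 - of_real a * u)"
    using norm_triangle_ineq2[of 1 "of_real a * u"] by simp
  moreover have "a * (2 - a) < 1"
  proof -
    have "0 < (1 - a)^2" using a by simp
    then show ?thesis by (simp add: power2_eq_square algebra_simps)
  qed
  ultimately have pos: "cmod (1 - of_real a * u) > 0" by linarith
  have "1/2 = (1 - a) / (2 * (1 - a))" using a by simp
  also have "\<dots> \<le> (1 - a) / cmod (1 - of_real a * u)"
    using up pos a by (intro divide_left_mono) auto
  also have "\<dots> = cmod (peak_kernel a u)" using a by (simp add: norm_peak_kernel)
  finally show ?thesis .
qed

definition peak_fun :: "real \<Rightarrow> real \<Rightarrow> nat \<Rightarrow> complex^'n \<Rightarrow> complex^'n \<Rightarrow> complex" where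
  "peak_fun K a m \<zeta> z = of_real K * peak_kernel a (cinner z \<zeta>) ^ m"

lemma norm_scaled_peak_kernel_pow:
  "K \<ge> 0 \<Longrightarrow> cmod (of_real K * peak_kernel a w ^ m) = K * cmod (peak_kernel a w) ^ m"
  by (simp add: norm_mult norm_power)

lemma peak_fun_holo:
  assumes a: "0 \<le> a" "a < 1" and \<zeta>: "norm \<zeta> = 1"
  shows "holo_fun (peak_fun K a m \<zeta>) (ball (0::complex^'n) 1)"
  unfolding peak_fun_def
proof (rule holo_fun_slice)
  fix z :: "complex^'n" assume z: "z \<in> ball 0 1"
  have "(\<lambda>v. of_real K * peak_kernel a v ^ m) holomorphic_on ball 0 1"
    unfolding peak_kernel_def
  proof (intro holomorphic_intros)
    fix v :: complex assume v: "v \<in> ball 0 1"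
    have "cmod (1 - of_real a * v) \<ge> 1 - a" using norm_one_minus_scaled(1)[of v a] v a by simp
    then show "1 - of_real a * v \<noteq> 0" using a by auto
  qed
  then show "(\<lambda>v. of_real K * peak_kernel a v ^ m) field_differentiable at (cinner z \<zeta>)"
    by (rule holomorphic_on_imp_differentiable_at) (use cinner_ball_sphere[OF z \<zeta>] in auto)
qed

lemma peak_fun_dilate_bounds:
  fixes x \<zeta> :: "complex^'n"
  assumes \<zeta>: "norm \<zeta> = 1" and x: "norm x = 1" and a: "0 \<le> a" "a < 1" and K: "K \<ge> 1"
    and m: "m \<ge> 1" and r: "0 < r" "r < 1"
  shows "cmod (dilate (peak_fun K a m \<zeta>) r x) \<le> K"
    and "cmod (1 - cinner x \<zeta>) \<ge> 2 * (1 - a) * K powr (1 / real m)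
           \<Longrightarrow> cmod (dilate (peak_fun K a m \<zeta>) r x) \<le> 1"
proof -
  define w where "w = cinner x \<zeta>"
  have w1: "cmod w \<le> 1" unfolding w_def using cinner_sphere_sphere[OF x \<zeta>] .
  have rw1: "cmod (of_real r * w) \<le> 1" using w1 r by (simp add: norm_mult mult_le_one)
  have cf: "cmod (dilate (peak_fun K a m \<zeta>) r x) = K * cmod (peak_kernel a (of_real r * w)) ^ m"
    unfolding dilate_def peak_fun_def w_def using K
    by (simp add: cinner_scaleR_left norm_scaled_peak_kernel_pow)
  have "cmod (peak_kernel a (of_real r * w)) ^ m \<le> 1"
    using peak_kernel_le_1[OF rw1 a] by (simp add: power_le_one)
  then show "cmod (dilate (peak_fun K a m \<zeta>) r x) \<le> K" unfolding cf using K
    by (simp add: mult_right_le_one_le)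
  assume far: "cmod (1 - cinner x \<zeta>) \<ge> 2 * (1 - a) * K powr (1 / real m)"
  have \<tau>0: "2 * (1 - a) * K powr (1 / real m) > 0" using a K by simp
  then have wn1: "w \<noteq> 1" using far unfolding w_def by auto
  have "cmod (peak_kernel a (of_real r * w)) \<le> 2 * (1 - a) / cmod (1 - w)"
    by (rule peak_kernel_le_far[OF w1 a _ _ wn1]) (use r in auto)
  also have "\<dots> \<le> 2 * (1 - a) / (2 * (1 - a) * K powr (1 / real m))"
    using far \<tau>0 a unfolding w_def by (intro divide_left_mono mult_pos_pos) auto
  also have "\<dots> = 1 / K powr (1 / real m)" using a by simp
  finally have "cmod (peak_kernel a (of_real r * w)) ^ m \<le> (1 / K powr (1 / real m)) ^ m"
    by (intro power_mono) simp_all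
  also have "\<dots> = 1 / K" using K m by (simp add: power_one_over powr_realpow[symmetric] powr_powr)
  finally show "cmod (dilate (peak_fun K a m \<zeta>) r x) \<le> 1" unfolding cf using K
    by (simp add: field_simps)
qed

text \<open>Uniform \<open>H\<^sup>\<psi>\<close> bound for the peak functions: \<open>B\<close> is an admissible constant for every
  dilate as soon as \<open>\<psi>(1/B) \<le> 1/2\<close> (off the cap) and the cap contributes at most 1/2.\<close>

lemma peak_fun_orlicz_bound:
  fixes \<zeta> :: "complex^'n"
  assumes o: "orlicz_function \<psi>" and \<zeta>: "norm \<zeta> = 1" and a: "0 \<le> a" "a < 1"
    and K: "K \<ge> 1" and m: "m \<ge> 1" and B: "B > 0" and hB: "\<psi> (1/B) \<le> 1/2"
    and cap_budget: "\<psi> (K/B) * (4 * 2^DIM(complex^'n)) * (2 * (1 - a) * K powr (1 / real m)) \<le> 1/2"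
    and r: "0 < r" "r < 1"
  shows "B \<in> orlicz_set \<psi> (dilate (peak_fun K a m \<zeta>) r)"
proof -
  define f where "f = dilate (peak_fun K a m \<zeta>) r"
  define \<tau> where "\<tau> = 2 * (1 - a) * K powr (1 / real m)"
  have \<tau>0: "\<tau> > 0" unfolding \<tau>_def using a K by simp
  define cap where "cap = {z \<in> unit_sphere. cmod (1 - cinner z \<zeta>) < \<tau>}"
  have capm[measurable]: "cap \<in> sets borel" unfolding cap_def by measurable
  have Sm[measurable]: "(unit_sphere :: (complex^'n) set) \<in> sets borel" by (simp add: borel_closed)
  have psKB: "\<psi> (K/B) \<ge> 0" using K B by (intro orlicz_nonneg[OF o]) auto
  have pt: "ennreal (\<psi> (cmod (f x) / B)) * indicator unit_sphere x
     \<le> ennreal (\<psi> (K/B)) * indicator cap x + ennreal (1/2) * indicator unit_sphere x" for x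
  proof (cases "x \<in> unit_sphere")
    case True
    show ?thesis
    proof (cases "x \<in> cap")
      case True
      have "\<psi> (cmod (f x) / B) \<le> \<psi> (K/B)" using peak_fun_dilate_bounds(1)[OF \<zeta> _ a K m r] \<open>x \<in> unit_sphere\<close> B
        unfolding f_def by (intro orlicz_mono[OF o]) (auto simp: divide_right_mono)
      then show ?thesis using True \<open>x \<in> unit_sphere\<close> by (simp add: add_increasing2 ennreal_leI)
    next
      case False
      then have "cmod (f x) \<le> 1" using peak_fun_dilate_bounds(2)[OF \<zeta> _ a K m r] \<open>x \<in> unit_sphere\<close>
        unfolding f_def cap_def \<tau>_def by auto
      then have "\<psi> (cmod (f x) / B) \<le> \<psi> (1/B)" using B by (intro orlicz_mono[OF o]) (auto simp: divide_right_mono)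
      then have "ennreal (\<psi> (cmod (f x) / B)) \<le> ennreal (1/2)" using hB by (intro ennreal_leI) simp
      then show ?thesis using \<open>x \<in> unit_sphere\<close> by (simp add: add_increasing)
    qed
  qed (simp add: cap_def)
  have "(\<integral>\<^sup>+ x. ennreal (\<psi> (cmod (f x) / B)) * indicator unit_sphere x \<partial>sphere_measure)
      \<le> (\<integral>\<^sup>+ x. ennreal (\<psi> (K/B)) * indicator cap x + ennreal (1/2) * indicator unit_sphere x
           \<partial>sphere_measure)"
    by (rule nn_integral_mono) (rule pt)
  also have "\<dots> = ennreal (\<psi> (K/B)) * emeasure sphere_measure cap
      + ennreal (1/2) * emeasure (sphere_measure :: (complex^'n) measure) unit_sphere"
    by (simp add: nn_integral_add nn_integral_cmult_indicator)
  also have "\<dots> \<le> ennreal (\<psi> (K/B)) * ennreal (4 * 2^DIM(complex^'n) * \<tau>) + ennreal (1/2) * 1"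
    using sphere_measure_cap_upper[OF \<zeta> \<tau>0] sphere_measure_le_1[OF Sm] unfolding cap_def
    by (intro add_mono mult_left_mono) auto
  also have "\<dots> = ennreal (\<psi> (K/B) * (4 * 2^DIM(complex^'n)) * \<tau>) + ennreal (1/2)"
    using psKB \<tau>0 by (simp add: ennreal_mult[symmetric] mult_ac)
  also have "\<dots> \<le> ennreal (1/2) + ennreal (1/2)"
    using cap_budget unfolding \<tau>_def by (intro add_mono ennreal_leI) auto
  also have "\<dots> = 1" using ennreal_plus[of "1/2" "1/2"] by simp
  finally show ?thesis unfolding orlicz_set_mem f_def using B by simp
qed

lemma peak_fun_hardy_orlicz:
  fixes \<zeta> :: "complex^'n"
  assumes o: "orlicz_function \<psi>" and \<zeta>: "norm \<zeta> = 1" and a: "0 \<le> a" "a < 1"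
    and K: "K \<ge> 1" and m: "m \<ge> 1" and B: "B > 0" and hB: "\<psi> (1/B) \<le> 1/2"
    and cap_budget: "\<psi> (K/B) * (4 * 2^DIM(complex^'n)) * (2 * (1 - a) * K powr (1 / real m)) \<le> 1/2"
  shows "peak_fun K a m \<zeta> \<in> hardy_orlicz \<psi>" and "ho_norm \<psi> (peak_fun K a m \<zeta>) \<le> B"
proof -
  have Bset: "\<forall>r\<in>{0<..<1}. B \<in> orlicz_set \<psi> (dilate (peak_fun K a m \<zeta>) r)"
    using peak_fun_orlicz_bound[OF assms] by auto
  then show "ho_norm \<psi> (peak_fun K a m \<zeta>) \<le> B" by (rule ho_norm_le)
  show "peak_fun K a m \<zeta> \<in> hardy_orlicz \<psi>"
    unfolding hardy_orlicz_def using peak_fun_holo[OF a \<zeta>] Bset lux_norm_le by blast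
qed

lemma comp_slice_peak_fun:
  assumes \<zeta>: "norm \<zeta> = 1"
  shows "comp_op (\<lambda>z. U (cinner z \<zeta>) *s \<zeta>) (peak_fun K a m \<zeta>) z
           = of_real K * peak_kernel a (U (cinner z \<zeta>)) ^ m"
  unfolding comp_op_def peak_fun_def by (simp add: cinner_smult_left cinner_unit_self[OF \<zeta>])

lemma comp_slice_peak_fun_le:
  assumes \<zeta>: "norm \<zeta> = 1" and a: "0 \<le> a" "a < 1" and K: "K \<ge> 0"
    and U: "\<And>v. cmod v < 1 \<Longrightarrow> cmod (U v) < 1" and z: "z \<in> ball 0 1"
  shows "cmod (comp_op (\<lambda>z. U (cinner z \<zeta>) *s \<zeta>) (peak_fun K a m \<zeta>) z) \<le> K"
proof -
  have "cmod (peak_kernel a (U (cinner z \<zeta>))) \<le> 1"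
    using U[OF cinner_ball_sphere[OF z \<zeta>]] by (intro peak_kernel_le_1 a) simp
  then have "cmod (peak_kernel a (U (cinner z \<zeta>))) ^ m \<le> 1" by (simp add: power_le_one)
  then show ?thesis
    unfolding comp_slice_peak_fun[OF \<zeta>] norm_scaled_peak_kernel_pow[OF K] using K
    by (simp add: mult_right_le_one_le)
qed

lemma comp_slice_peak_fun_ge:
  assumes \<zeta>: "norm \<zeta> = 1" and a: "0 \<le> a" "a < 1" and K: "K \<ge> 0"
    and U: "\<And>v. cmod v < 1 \<Longrightarrow> cmod (1 - U v) \<le> cmod (1 - v) powr \<alpha>"
    and \<alpha>: "0 < \<alpha>" and s: "0 < s" "s \<le> 1" and st: "(2 * s) powr \<alpha> \<le> 1 - a"
    and z: "z \<in> unit_sphere \<inter> ball \<zeta> s"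
  shows "cmod (comp_op (\<lambda>z. U (cinner z \<zeta>) *s \<zeta>) (peak_fun K a m \<zeta>) ((1 - s/2) *\<^sub>R z)) \<ge> K / 2^m"
proof -
  define r where "r = 1 - s/2"
  define w where "w = cinner z \<zeta>"
  define v where "v = of_real r * w"
  have r: "0 < r" "r < 1" unfolding r_def using s by auto
  have "1 - w = cinner (\<zeta> - z) \<zeta>" unfolding w_def by (simp add: cinner_diff_left cinner_unit_self[OF \<zeta>])
  then have "cmod (1 - w) \<le> norm (\<zeta> - z) * norm \<zeta>" using cinner_cauchy_schwarz by metis
  then have cw: "cmod (1 - w) < s" using z \<zeta> by (simp add: dist_norm)
  have w1: "cmod w \<le> 1" unfolding w_def using cinner_sphere_sphere[of z \<zeta>] z \<zeta> by simp
  have "r * cmod w \<le> r" using w1 r by (intro mult_right_le_one_le) auto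
  moreover have "cmod v = r * cmod w" unfolding v_def using r by (simp add: norm_mult)
  ultimately have v1: "cmod v < 1" using r by linarith
  have "cmod (1 - v) \<le> cmod (complex_of_real (1 - r)) + cmod (of_real r * (1 - w))"
    using norm_triangle_ineq[of "complex_of_real (1 - r)" "of_real r * (1 - w)"]
    unfolding v_def by (simp add: algebra_simps)
  also have "\<dots> = (1 - r) + r * cmod (1 - w)" using r by (simp add: norm_mult)
  also have "\<dots> \<le> (1 - r) + cmod (1 - w)" using r mult_left_le_one_le[of "cmod (1 - w)" r] by simp
  finally have cv2: "cmod (1 - v) \<le> 2 * s" using cw s unfolding r_def by linarith
  have "cmod (1 - U v) \<le> cmod (1 - v) powr \<alpha>" using U[OF v1] .
  also have "\<dots> \<le> (2 * s) powr \<alpha>" using cv2 \<alpha> by (intro powr_mono2) auto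
  finally have "cmod (peak_kernel a (U v)) \<ge> 1/2" using st by (intro peak_kernel_ge_half a) auto
  then have "(1/2)^m \<le> cmod (peak_kernel a (U v)) ^ m" by (intro power_mono) auto
  then have "K * (1/2)^m \<le> K * cmod (peak_kernel a (U v)) ^ m" using K by (intro mult_left_mono) auto
  moreover have "cinner (r *\<^sub>R z) \<zeta> = v" unfolding v_def w_def by (simp add: cinner_scaleR_left)
  ultimately show ?thesis
    unfolding comp_slice_peak_fun[OF \<zeta>] norm_scaled_peak_kernel_pow[OF K] r_def
    by (simp add: power_one_over)
qed

text \<open>Separation of composed peak functions: if \<open>K\<^sub>2 \<ge> 2^(m+1) K\<^sub>1\<close> and the cap radius \<open>s\<close>
  satisfies \<open>\<psi>(K\<^sub>2) (s/4)^(2N) = 2\<close>, then \<open>1/2^(m+1)\<close> is not admissible for the difference of the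
  images at radius \<open>1 - s/2\<close>: its Orlicz integral over the cap alone is already 2.\<close>

lemma comp_slice_peak_funs_separated:
  fixes \<zeta> :: "complex^'n"
  assumes o: "orlicz_function \<psi>" and \<zeta>: "norm \<zeta> = 1"
    and U: "\<And>v. cmod v < 1 \<Longrightarrow> cmod (U v) < 1"
      "\<And>v. cmod v < 1 \<Longrightarrow> cmod (1 - U v) \<le> cmod (1 - v) powr \<alpha>"
    and \<alpha>: "0 < \<alpha>"
    and a1: "0 \<le> a1" "a1 < 1" and a2: "0 \<le> a2" "a2 < 1"
    and K1: "K1 \<ge> 0" and K12: "K1 * 2^(m+1) \<le> K2"
    and s: "0 < s" "s < 1" and st: "(2 * s) powr \<alpha> \<le> 1 - a2"
    and cap: "\<psi> K2 * (s/4)^DIM(complex^'n) = 2"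
  shows "1 / 2^(m+1) \<notin> orlicz_set \<psi> (dilate (\<lambda>z.
           comp_op (\<lambda>z. U (cinner z \<zeta>) *s \<zeta>) (peak_fun K2 a2 m \<zeta>) z -
           comp_op (\<lambda>z. U (cinner z \<zeta>) *s \<zeta>) (peak_fun K1 a1 m \<zeta>) z) (1 - s/2))"
    (is "?c \<notin> orlicz_set \<psi> (dilate ?D (1 - s/2))")
proof
  assume adm: "?c \<in> orlicz_set \<psi> (dilate ?D (1 - s/2))"
  have K2: "K2 \<ge> 0" using K1 K12 by (smt (verit) zero_le_mult_iff zero_le_power)
  have "ennreal (\<psi> K2 * (s/4)^DIM(complex^'n))
      \<le> (\<integral>\<^sup>+ x. ennreal (\<psi> (cmod (dilate ?D (1 - s/2) x) / ?c)) * indicator unit_sphere x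
           \<partial>(sphere_measure :: (complex^'n) measure))"
  proof (rule orlicz_integral_cap_lower[OF o \<zeta>])
    fix x assume x: "x \<in> unit_sphere \<inter> ball \<zeta> s"
    have rx: "(1 - s/2) *\<^sub>R x \<in> ball 0 1" using x s by auto
    have "K2 / 2^m \<le> cmod (comp_op (\<lambda>z. U (cinner z \<zeta>) *s \<zeta>) (peak_fun K2 a2 m \<zeta>) ((1 - s/2) *\<^sub>R x))"
      using comp_slice_peak_fun_ge[OF \<zeta> a2 K2 U(2) \<alpha> _ _ st x] s by simp
    moreover have "cmod (comp_op (\<lambda>z. U (cinner z \<zeta>) *s \<zeta>) (peak_fun K1 a1 m \<zeta>) ((1 - s/2) *\<^sub>R x)) \<le> K1"
      by (rule comp_slice_peak_fun_le[OF \<zeta> a1 K1 U(1) rx])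
    ultimately have "K2 / 2^m - K1 \<le> cmod (dilate ?D (1 - s/2) x)"
      unfolding dilate_def using norm_triangle_ineq2 by (smt (verit))
    moreover have "K2 * ?c \<le> K2 / 2^m - K1" using K12 by (simp add: field_simps)
    ultimately have "K2 * ?c \<le> cmod (dilate ?D (1 - s/2) x)" by linarith
    then show "K2 \<le> cmod (dilate ?D (1 - s/2) x) / ?c" by (subst pos_le_divide_eq) auto
  qed (use s K2 in auto)
  also have "\<dots> \<le> 1" using adm unfolding orlicz_set_mem by blast
  finally show False using cap by simp
qed


section \<open>Choice of the parameters\<close>

text \<open>For the peak function of height \<open>K\<close> the cap radius \<open>s(K)\<close> is chosen so that
  \<open>\<psi>(K) (s/4)^d = 2\<close> (with \<open>d = 2N\<close> the real dimension), and the peak parameter so that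
  \<open>1 - a(K) = (2 s(K))^\<alpha>\<close>.\<close>

definition cap_radius :: "(real \<Rightarrow> real) \<Rightarrow> nat \<Rightarrow> real \<Rightarrow> real" where
  "cap_radius \<psi> d K = 4 * (2 / \<psi> K) powr (1 / real d)"

definition peak_param :: "(real \<Rightarrow> real) \<Rightarrow> nat \<Rightarrow> real \<Rightarrow> real \<Rightarrow> real" where
  "peak_param \<psi> d \<alpha> K = 1 - (2 * cap_radius \<psi> d K) powr \<alpha>"

lemma cap_radius_props:
  assumes d: "d \<ge> 1" and big: "\<psi> K > 2 * 8^d"
  shows "0 < cap_radius \<psi> d K" and "cap_radius \<psi> d K < 1/2"
    and "\<psi> K * (cap_radius \<psi> d K / 4)^d = 2"
proof -
  have ps0: "\<psi> K > 0" using big by (smt (verit) zero_less_power)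
  show "0 < cap_radius \<psi> d K" unfolding cap_radius_def using ps0 by simp
  have "((2 / \<psi> K) powr (1 / real d))^d = 2 / \<psi> K"
    using ps0 d by (simp add: powr_realpow[symmetric] powr_powr)
  then show "\<psi> K * (cap_radius \<psi> d K / 4)^d = 2" unfolding cap_radius_def using ps0 by simp
  have "2 / \<psi> K < 1 / 8^d" using big ps0 by (simp add: field_simps)
  then have "(2 / \<psi> K) powr (1 / real d) < (1 / 8^d) powr (1 / real d)"
    using ps0 d by (intro powr_less_mono2) auto
  also have "(1 / 8^d :: real) = (1/8) powr real d" by (simp add: powr_realpow power_one_over)
  also have "\<dots> powr (1 / real d) = 1/8" using d by (simp add: powr_powr)
  finally show "cap_radius \<psi> d K < 1/2" unfolding cap_radius_def by simp
qed

lemma peak_param_props: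
  assumes d: "d \<ge> 1" and big: "\<psi> K > 2 * 8^d" and \<alpha>: "0 < \<alpha>"
  shows "0 \<le> peak_param \<psi> d \<alpha> K" and "peak_param \<psi> d \<alpha> K < 1"
proof -
  have s: "0 < 2 * cap_radius \<psi> d K" "2 * cap_radius \<psi> d K < 1"
    using cap_radius_props(1,2)[where \<psi>=\<psi> and K=K, OF d big] by auto
  have "(2 * cap_radius \<psi> d K) powr \<alpha> < 1 powr \<alpha>" using s \<alpha> by (intro powr_less_mono2) auto
  then show "0 \<le> peak_param \<psi> d \<alpha> K" unfolding peak_param_def by simp
  show "peak_param \<psi> d \<alpha> K < 1" unfolding peak_param_def using s by simp
qed

lemma le_powr_root:
  fixes y p :: real
  assumes "y \<ge> 0" "y ^ n \<le> p" "n > 0"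
  shows "y \<le> p powr (1 / n)"
proof (cases "y = 0")
  case False
  then have yp: "y > 0" using assms by simp
  have "y = (y ^ n) powr (1 / n)" using yp assms(3) by (simp add: powr_realpow[symmetric] powr_powr)
  also have "\<dots> \<le> p powr (1 / n)" using assms yp by (intro powr_mono2) auto
  finally show ?thesis .
qed simp

lemma delta2_power_bound:
  assumes o: "orlicz_function \<psi>" and d2: "delta2_condition \<psi>" and \<gamma>: "\<gamma> > 0"
  obtains C0 x0 where "C0 \<ge> 1" "x0 > 0"
    "\<And>B K. B \<ge> C0 \<Longrightarrow> K \<ge> B * x0 \<Longrightarrow> \<psi> K \<ge> 1 \<Longrightarrow> \<psi> (K/B) \<le> \<psi> K powr \<gamma>"
proof -
  obtain C x0 where C: "C \<ge> 1" "x0 > 0" "\<And>J x. x \<ge> x0 \<Longrightarrow> \<psi> x ^ (2^J) \<le> \<psi> (C^J * x)"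
    using delta2_iterate[OF o d2] by blast
  obtain J where J: "(1/2::real)^J < \<gamma>" using real_arch_pow_inv[OF \<gamma>, of "1/2"] by auto
  have CJ: "C^J \<ge> 1" using C by simp
  have "\<psi> (K/B) \<le> \<psi> K powr \<gamma>" if B: "B \<ge> C^J" and K: "K \<ge> B * x0" and psK: "\<psi> K \<ge> 1" for B K
  proof -
    have B0: "B > 0" using B CJ by linarith
    have "B * x0 > 0" using B0 C(2) by simp
    then have K0: "K > 0" using K by linarith
    have "x0 \<le> K / B" using K B0 by (simp add: le_divide_eq mult.commute)
    also have KB: "\<dots> \<le> K / C^J" using K0 B CJ by (intro divide_left_mono) auto
    finally have KC: "K / C^J \<ge> x0" .
    have y0: "\<psi> (K/B) \<ge> 0" using K0 B0 by (intro orlicz_nonneg[OF o]) auto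
    have "\<psi> (K/B) \<le> \<psi> (K / C^J)" using K0 B0 KB by (intro orlicz_mono[OF o]) auto
    then have "\<psi> (K/B) ^ (2^J) \<le> \<psi> (K / C^J) ^ (2^J)" using y0 by (intro power_mono) auto
    also have "\<dots> \<le> \<psi> (C^J * (K / C^J))" using C(3)[OF KC] .
    also have "C^J * (K / C^J) = K" using CJ
      by (metis not_one_le_zero times_divide_eq_right nonzero_mult_div_cancel_left)
    finally have "\<psi> (K/B) \<le> \<psi> K powr (1 / real (2^J::nat))" by (intro le_powr_root y0) simp_all
    also have "\<dots> \<le> \<psi> K powr \<gamma>"
      using J psK by (intro powr_mono) (simp_all add: power_one_over)
    finally show ?thesis .
  qed
  then show ?thesis using that[of "C^J" x0] CJ C(2) by blast
qed

text \<open>The elementary inequality behind the cap budget: with \<open>y \<le> P^\<gamma>\<close>, \<open>K \<le> P\<close>, \<open>1/m \<le> \<gamma>\<close> and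
  \<open>\<alpha>/d = 3\<gamma>\<close>, the quantity \<open>y A (2 s^\<alpha> K^(1/m))\<close> with \<open>s \<sim> P^(-1/d)\<close> is \<open>O(P^(-\<gamma>))\<close>.\<close>

lemma cap_budget_bound:
  fixes y P K \<alpha> \<gamma> A :: real and d m :: nat
  assumes P: "P \<ge> 1" and K: "1 \<le> K" "K \<le> P" and y: "y \<ge> 0" "y \<le> P powr \<gamma>"
    and m: "m \<ge> 1" "1 / real m \<le> \<gamma>" and g: "\<gamma> > 0" "\<alpha> / real d = 3 * \<gamma>" and d: "d \<ge> 1"
    and A: "A > 0" and \<alpha>: "\<alpha> > 0"
    and big: "P powr \<gamma> \<ge> 2 * (A * 2 * 8 powr \<alpha> * 2 powr (\<alpha> / real d))"
  shows "y * A * (2 * (2 * (4 * (2 / P) powr (1 / real d))) powr \<alpha> * K powr (1 / real m)) \<le> 1/2"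
proof -
  let ?c = "A * 2 * 8 powr \<alpha> * 2 powr (\<alpha> / real d)"
  have P0: "P > 0" using P by simp
  have "(2 * (4 * (2 / P) powr (1 / real d))) powr \<alpha> = 8 powr \<alpha> * ((2 / P) powr (1 / real d)) powr \<alpha>"
    using P0 by (simp add: powr_mult[symmetric] mult.assoc)
  also have "((2 / P) powr (1 / real d)) powr \<alpha> = 2 powr (\<alpha> / real d) * P powr (- (\<alpha> / real d))"
    using P0 by (simp add: powr_powr powr_divide powr_minus_divide)
  finally have t: "2 * (2 * (4 * (2 / P) powr (1 / real d))) powr \<alpha>
      = 2 * 8 powr \<alpha> * 2 powr (\<alpha> / real d) * P powr (- (\<alpha> / real d))" by simp
  have "K powr (1 / real m) \<le> P powr (1 / real m)" using K by (intro powr_mono2) auto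
  also have "\<dots> \<le> P powr \<gamma>" using P m by (intro powr_mono) auto
  finally have R: "K powr (1 / real m) \<le> P powr \<gamma>" .
  have e: "P powr \<gamma> * P powr (- (\<alpha> / real d)) * P powr \<gamma> = P powr (- \<gamma>)"
    using g P0 by (simp add: powr_add[symmetric])
  have "y * A * (2 * (2 * (4 * (2 / P) powr (1 / real d))) powr \<alpha> * K powr (1 / real m))
      = ?c * (y * P powr (- (\<alpha> / real d)) * K powr (1 / real m))"
    unfolding t by (simp add: mult_ac)
  also have "\<dots> \<le> ?c * (P powr \<gamma> * P powr (- (\<alpha> / real d)) * P powr \<gamma>)"
    using y R A by (intro mult_left_mono mult_mono) auto
  also have "\<dots> = ?c / P powr \<gamma>" unfolding e by (simp add: powr_minus_divide)
  also have "\<dots> \<le> 1/2" using P0 big by (subst divide_le_eq) auto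
  finally show ?thesis .
qed

lemma peak_parameters:
  assumes o: "orlicz_function \<psi>" and d2: "delta2_condition \<psi>" and \<alpha>: "0 < \<alpha>" and d: "d \<ge> 1"
  obtains B K0 m where "B > 0" "\<psi> (1/B) \<le> 1/2" "m \<ge> (1::nat)" "K0 \<ge> 1"
    "\<And>K. K \<ge> K0 \<Longrightarrow> \<psi> K > 2 * 8^d"
    "\<And>K. K \<ge> K0 \<Longrightarrow>
       \<psi> (K/B) * (4 * 2^d) * (2 * (2 * cap_radius \<psi> d K) powr \<alpha> * K powr (1 / real m)) \<le> 1/2"
proof -
  define \<gamma> where "\<gamma> = \<alpha> / (3 * real d)"
  have \<gamma>0: "\<gamma> > 0" and \<gamma>d: "\<alpha> / real d = 3 * \<gamma>" unfolding \<gamma>_def using \<alpha> d by auto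
  obtain m0 :: nat where m0: "1 / \<gamma> < real m0" using reals_Archimedean2 by blast
  define m where "m = m0 + 1"
  have m1: "m \<ge> 1" unfolding m_def by simp
  have mg: "1 / real m \<le> \<gamma>" using m0 \<gamma>0 unfolding m_def by (simp add: field_simps)
  obtain C0 x0 where C0: "C0 \<ge> 1" "x0 > 0"
    and ratio: "\<And>B K. B \<ge> C0 \<Longrightarrow> K \<ge> B * x0 \<Longrightarrow> \<psi> K \<ge> 1 \<Longrightarrow> \<psi> (K/B) \<le> \<psi> K powr \<gamma>"
    using delta2_power_bound[OF o d2 \<gamma>0] by blast
  obtain y0 where y0: "y0 > 0" "\<And>y. 0 \<le> y \<and> y \<le> y0 \<Longrightarrow> \<psi> y \<le> 1/2"
    using orlicz_small_near_zero[OF o] by blast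
  define B where "B = max C0 (1/y0)"
  have B0: "B > 0" and BC: "B \<ge> C0" unfolding B_def using C0 by auto
  have "1/B \<le> 1/(1/y0)" using y0 B0 unfolding B_def by (intro divide_left_mono) auto
  then have "1/B \<le> y0" by simp
  then have hB: "\<psi> (1/B) \<le> 1/2" using y0 B0 by simp
  obtain K1 where K1: "\<And>K. K \<ge> K1 \<Longrightarrow> K \<le> \<psi> K"
    using orlicz_superlinear[OF o] unfolding eventually_at_top_linorder by blast
  define A :: real where "A = 4 * 2^d"
  define Const where "Const = A * 2 * 8 powr \<alpha> * 2 powr (\<alpha> / real d)"
  have Const0: "Const > 0" unfolding Const_def A_def by simp
  define K0 where "K0 = Max {1, K1, B * x0, (2 * Const) powr (1/\<gamma>), 2 * 8^d + 1}"
  have K0: "K0 \<ge> 1" "K0 \<ge> K1" "K0 \<ge> B * x0" "K0 \<ge> (2 * Const) powr (1/\<gamma>)" "K0 \<ge> 2 * 8^d + 1"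
    unfolding K0_def by auto
  have budget: "\<psi> (K/B) * (4 * 2^d) * (2 * (2 * cap_radius \<psi> d K) powr \<alpha> * K powr (1 / real m)) \<le> 1/2"
    if KK: "K0 \<le> K" for K
  proof -
    have psK: "\<psi> K \<ge> K" using K1 K0 KK by simp
    have y0': "\<psi> (K/B) \<ge> 0" using K0 KK B0 by (intro orlicz_nonneg[OF o]) auto
    have "\<psi> (K/B) \<le> \<psi> K powr \<gamma>" using K0 KK psK by (intro ratio BC) auto
    moreover have "\<psi> K powr \<gamma> \<ge> 2 * Const"
    proof -
      have "(2 * Const) powr (1/\<gamma>) \<le> \<psi> K" using psK K0 KK by linarith
      then have "((2 * Const) powr (1/\<gamma>)) powr \<gamma> \<le> \<psi> K powr \<gamma>"
        using \<gamma>0 Const0 by (intro powr_mono2) auto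
      then show ?thesis using \<gamma>0 Const0 by (simp add: powr_powr)
    qed
    ultimately have "\<psi> (K/B) * A * (2 * (2 * (4 * (2 / \<psi> K) powr (1 / real d))) powr \<alpha>
        * K powr (1 / real m)) \<le> 1/2"
      using K0 KK psK y0' \<gamma>0 \<alpha>
      by (intro cap_budget_bound[OF _ _ _ _ _ m1 mg _ \<gamma>d d]) (auto simp: A_def Const_def)
    then show ?thesis unfolding A_def cap_radius_def by simp
  qed
  show ?thesis
  proof (rule that[OF B0 hB m1 K0(1) _ budget])
    show "\<psi> K > 2 * 8^d" if "K \<ge> K0" for K using K1[of K] K0 that by simp
  qed
qed


lemma geometric_heights:
  fixes K0 :: real
  assumes K0: "K0 \<ge> 1"
  shows "K0 \<le> K0 * 2^((m+1)*j)" and "i < j \<Longrightarrow> K0 * 2^((m+1)*i) * 2^(m+1) \<le> K0 * 2^((m+1)*j)"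
proof -
  show "K0 \<le> K0 * 2^((m+1)*j)" using K0 mult_left_mono[of 1 "2^((m+1)*j)" K0] by simp
  assume "i < j"
  then have "(m+1)*i + (m+1) \<le> (m+1)*j" by (metis Suc_leI add.commute mult_Suc_right mult_le_mono2)
  then have "(2::real)^((m+1)*i + (m+1)) \<le> 2^((m+1)*j)" by (intro power_increasing) auto
  then show "K0 * 2^((m+1)*i) * 2^(m+1) \<le> K0 * 2^((m+1)*j)" using K0 by (simp add: power_add mult.assoc)
qed

lemma slice_composition_not_compact:
  fixes \<zeta> :: "complex^'n" and U :: "complex \<Rightarrow> complex"
  assumes o: "orlicz_function \<psi>" and d2: "delta2_condition \<psi>" and \<zeta>: "norm \<zeta> = 1"
    and \<alpha>: "0 < \<alpha>"
    and U: "\<And>v. cmod v < 1 \<Longrightarrow> cmod (U v) < 1"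
      "\<And>v. cmod v < 1 \<Longrightarrow> cmod (1 - U v) \<le> cmod (1 - v) powr \<alpha>"
  shows "\<not> compact_op_ho \<psi> (comp_op (\<lambda>z. U (cinner z \<zeta>) *s \<zeta>))"
proof -
  define d where "d = DIM(complex^'n)"
  have d1: "d \<ge> 1" unfolding d_def using DIM_positive[where 'a="complex^'n"] by linarith
  obtain B K0 m where B: "B > 0" "\<psi> (1/B) \<le> 1/2" and m: "m \<ge> 1" and K0: "K0 \<ge> 1"
    and big: "\<And>K. K \<ge> K0 \<Longrightarrow> \<psi> K > 2 * 8^d"
    and budget: "\<And>K. K \<ge> K0 \<Longrightarrow>
       \<psi> (K/B) * (4 * 2^d) * (2 * (2 * cap_radius \<psi> d K) powr \<alpha> * K powr (1 / real m)) \<le> 1/2"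
    by (rule peak_parameters[OF o d2 \<alpha> d1]) blast
  define Ks where "Ks j = K0 * 2^((m+1)*j)" for j :: nat
  define F where "F j = peak_fun (Ks j) (peak_param \<psi> d \<alpha> (Ks j)) m \<zeta>" for j
  have Ks: "Ks j \<ge> K0" for j unfolding Ks_def by (rule geometric_heights(1)[OF K0])
  have Ks_sep: "Ks i * 2^(m+1) \<le> Ks j" if "i < j" for i j
    unfolding Ks_def by (rule geometric_heights(2)[OF K0 that])
  have a: "0 \<le> peak_param \<psi> d \<alpha> (Ks j)" "peak_param \<psi> d \<alpha> (Ks j) < 1" for j
    using peak_param_props[where \<psi>=\<psi> and K="Ks j", OF d1 big[OF Ks] \<alpha>] by auto
  have one_minus_a: "1 - peak_param \<psi> d \<alpha> K = (2 * cap_radius \<psi> d K) powr \<alpha>" for K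
    unfolding peak_param_def by simp
  have cap_budget: "\<psi> (Ks j / B) * (4 * 2^DIM(complex^'n)) *
      (2 * (1 - peak_param \<psi> d \<alpha> (Ks j)) * Ks j powr (1 / real m)) \<le> 1/2" for j
    using budget[OF Ks] unfolding peak_param_def d_def by simp
  show ?thesis
  proof (rule not_compact_if_separated[OF o, of F B "1 / 2^(m+1)"])
    fix j
    show "F j \<in> hardy_orlicz \<psi>" "ho_norm \<psi> (F j) \<le> B"
      unfolding F_def using peak_fun_hardy_orlicz[OF o \<zeta> a _ m B cap_budget] K0 Ks[of j] by auto
  next
    fix i j :: nat assume ij: "i < j"
    define s where "s = cap_radius \<psi> d (Ks j)"
    have s: "0 < s" "s < 1/2" "\<psi> (Ks j) * (s/4)^DIM(complex^'n) = 2"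
      using cap_radius_props[where \<psi>=\<psi> and K="Ks j", OF d1 big[OF Ks]] unfolding s_def d_def by auto
    have "1 / 2^(m+1) \<notin> orlicz_set \<psi> (dilate (\<lambda>z.
        comp_op (\<lambda>z. U (cinner z \<zeta>) *s \<zeta>) (F j) z - comp_op (\<lambda>z. U (cinner z \<zeta>) *s \<zeta>) (F i) z) (1 - s/2))"
      unfolding F_def
      by (rule comp_slice_peak_funs_separated[OF o \<zeta> U \<alpha> a a _ Ks_sep[OF ij]])
         (use K0 Ks[of i] s one_minus_a[of "Ks j"] in \<open>auto simp: s_def\<close>)
    moreover have "1 - s/2 \<in> {0<..<1}" using s by auto
    ultimately show "\<exists>r\<in>{0<..<1}. 1 / 2^(m+1) \<notin> orlicz_set \<psi> (dilate (\<lambda>z.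
        comp_op (\<lambda>z. U (cinner z \<zeta>) *s \<zeta>) (F j) z - comp_op (\<lambda>z. U (cinner z \<zeta>) *s \<zeta>) (F i) z) r)"
      by blast
  qed simp
qed

theorem theorem3p5:
  fixes \<psi> :: "real \<Rightarrow> real" and \<zeta> :: "complex ^ 'n" and b :: real
  assumes "orlicz_function \<psi>" and "delta2_condition \<psi>"
    and "\<zeta> \<in> sphere 0 1" and "b > 1"
  shows "\<exists>\<phi> :: complex ^ 'n \<Rightarrow> complex ^ 'n.
           holo_map \<phi> (ball 0 1) \<and> \<phi> ` ball 0 1 \<subseteq> ball 0 1 \<and>
           \<phi> ` ball 0 1 \<subseteq> koranyi \<zeta> b \<and>
           \<not> compact_op_ho \<psi> (comp_op \<phi>)"
proof -
  have \<zeta>: "norm \<zeta> = 1" using assms(3) by simp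
  obtain \<alpha> U where \<alpha>: "0 < \<alpha>" "\<alpha> \<le> 1"
    and hol: "\<And>v. cmod v < 1 \<Longrightarrow> U field_differentiable (at v)"
    and hoelder: "\<And>v. cmod v < 1 \<Longrightarrow> cmod (1 - U v) \<le> cmod (1 - v) powr \<alpha>"
    and stolz: "\<And>v. cmod v < 1 \<Longrightarrow> cmod (U v) < 1 \<and> cmod (1 - U v) < b / 2 * (1 - (cmod (U v))\<^sup>2)"
    by (rule stolz_symbol_exists[OF assms(4)]) blast
  define \<phi> where "\<phi> = (\<lambda>z::complex^'n. U (cinner z \<zeta>) *s \<zeta>)"
  have "holo_map \<phi> (ball 0 1)" "\<phi> ` ball 0 1 \<subseteq> ball 0 1" "\<phi> ` ball 0 1 \<subseteq> koranyi \<zeta> b"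
    unfolding \<phi>_def using slice_map_into_koranyi[OF \<zeta> hol stolz] by auto
  moreover have "\<not> compact_op_ho \<psi> (comp_op \<phi>)"
    unfolding \<phi>_def using stolz hoelder
    by (intro slice_composition_not_compact[OF assms(1,2) \<zeta> \<alpha>(1)]) auto
  ultimately show ?thesis by blast
qed

end
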